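(* Let $\mathcal{X}$ be a measurable space, let $k:\mathcal{X}\times\mathcal{X}\to\mathbb{R}$ be a measurable reproducing kernel with $|k(x,y)|\le 1$ for all $x,y\in\mathcal{X}$, and let $\{\mathbb{P}_\theta:\theta\in\Theta\}$ be a family of Borel probability measures on $\mathcal{X}$. Let $\mathbb{P}^*_0$ be a Borel probability measure on $\mathcal{X}$, let $n\ge 1$, and let $x_1,\dots,x_n$ be i.i.d. with law $\mathbb{P}^*_0$. Fix $\alpha>0$, an integer $T\ge 1$ and a Borel probability measure $\mathbb{F}$ on $\mathcal{X}$, and let $\nu_n$ be the approximate posterior defined in the context. Then \[ \mathbb{E}_{x_{1:n}\overset{\text{iid}}{\sim}\mathbb{P}^*_0}\Big[\mathbb{E}_{\mathbb{P}\sim\nu_n}\big[\mathrm{MMD}(\mathbb{P}^*_0,\mathbb{P}_{\theta^*(\mathbb{P})})\big]\Big] \le \inf_{\theta\in\Theta}\mathrm{MMD}(\mathbb{P}^*_0,\mathbb{P}_\theta)+\frac{2}{\sqrt{n}}+2\sqrt{\frac{2(n-1)+\alpha(\alpha+1)}{(\alpha+n)(n+\alpha+1)}}+2\sqrt{\frac{\alpha(1+\alpha)}{(\alpha+n)(\alpha+n+1)}}. \]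
   Context: For a Borel probability measure $\mathbb{P}$ on $\mathcal{X}$, its kernel mean embedding is $\mu_{\mathbb{P}}=\int k(x,\cdot)\,\mathbb{P}(dx)$, an element of the reproducing kernel Hilbert space $\mathcal{H}_k$ of $k$, and the maximum mean discrepancy is $\mathrm{MMD}(\mathbb{P},\mathbb{Q})=\|\mu_{\mathbb{P}}-\mu_{\mathbb{Q}}\|_{\mathcal{H}_k}$. For a probability measure $\mathbb{P}$, $\theta^*(\mathbb{P})$ denotes a minimiser $\theta^*(\mathbb{P})\in\arg\inf_{\theta\in\Theta}\mathrm{MMD}^2(\mathbb{P},\mathbb{P}_\theta)$ (assumed to exist and to be chosen measurably). Given data $x_{1:n}$, the approximate posterior $\nu_n$ is the law of the random probability measure $\mathbb{P}=\sum_{i=1}^n w_i\delta_{x_i}+\sum_{k=1}^T\tilde w_k\delta_{\tilde x_k}$, where $\tilde x_1,\dots,\tilde x_T$ are i.i.d. with law $\mathbb{F}$, independent of the weights $(w_1,\dots,w_n,\tilde w_1,\dots,\tilde w_T)\sim\mathrm{Dirichlet}(1,\dots,1,\tfrac{\alpha}{T},\dots,\tfrac{\alpha}{T})$ ($n$ parameters equal to $1$ and $T$ equal to $\alpha/T$). *)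

theory Defs
  imports "HOL-Probability.Probability"
begin

text \<open>Positive definite (reproducing) kernel: symmetric, and every Gram matrix is
  positive semidefinite. By Moore-Aronszajn these are exactly the reproducing kernels.\<close>
definition pd_kernel :: "'a set \<Rightarrow> ('a \<Rightarrow> 'a \<Rightarrow> real) \<Rightarrow> bool" where
  "pd_kernel X k \<longleftrightarrow> (\<forall>x\<in>X. \<forall>y\<in>X. k x y = k y x) \<and>
     (\<forall>(N::nat) (z::nat \<Rightarrow> 'a) (c::nat \<Rightarrow> real). (\<forall>i<N. z i \<in> X) \<longrightarrow>
        (\<Sum>i<N. \<Sum>j<N. c i * c j * k (z i) (z j)) \<ge> 0)"

text \<open>Squared MMD: the squared RKHS norm of the difference of kernel mean embeddings,
  written out via the reproducing property
  (||mu_P - mu_Q||^2 = <mu_P,mu_P> - 2<mu_P,mu_Q> + <mu_Q,mu_Q>).\<close>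
definition mmd2 :: "('a \<Rightarrow> 'a \<Rightarrow> real) \<Rightarrow> 'a measure \<Rightarrow> 'a measure \<Rightarrow> real" where
  "mmd2 k P Q =
     (\<integral>x. (\<integral>y. k x y \<partial>P) \<partial>P) - 2 * (\<integral>x. (\<integral>y. k x y \<partial>Q) \<partial>P)
     + (\<integral>x. (\<integral>y. k x y \<partial>Q) \<partial>Q)"

definition mmd :: "('a \<Rightarrow> 'a \<Rightarrow> real) \<Rightarrow> 'a measure \<Rightarrow> 'a measure \<Rightarrow> real" where
  "mmd k P Q = sqrt (mmd2 k P Q)"

definition gamma_measure :: "real \<Rightarrow> real measure" where
  "gamma_measure a = density lborel
     (\<lambda>x. ennreal (if x > 0 then x powr (a - 1) * exp (- x) / Gamma a else 0))"

definition dirichlet :: "nat \<Rightarrow> (nat \<Rightarrow> real) \<Rightarrow> (nat \<Rightarrow> real) measure" where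
  "dirichlet N a = distr (PiM {..<N} (\<lambda>i. gamma_measure (a i))) (PiM {..<N} (\<lambda>_. borel))
     (\<lambda>g. restrict (\<lambda>i. g i / (\<Sum>j<N. g j)) {..<N})"

definition wpm :: "'a measure \<Rightarrow> nat \<Rightarrow> (nat \<Rightarrow> 'a) \<Rightarrow> (nat \<Rightarrow> real) \<Rightarrow> 'a measure" where
  "wpm M N z w = measure_of (space M) (sets M)
     (\<lambda>A. \<Sum>i<N. ennreal (w i) * indicator A (z i))"

text \<open>Atoms of the posterior draw: data points x_1..x_n followed by x~_1..x~_T.\<close>
definition atoms :: "nat \<Rightarrow> (nat \<Rightarrow> 'a) \<Rightarrow> (nat \<Rightarrow> 'a) \<Rightarrow> nat \<Rightarrow> 'a" where
  "atoms n xs xt = (\<lambda>i. if i < n then xs i else xt (i - n))"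

definition dir_params :: "nat \<Rightarrow> nat \<Rightarrow> real \<Rightarrow> nat \<Rightarrow> real" where
  "dir_params n T \<alpha> = (\<lambda>i. if i < n then 1 else \<alpha> / real T)"

text \<open>Joint law of (weights, auxiliary atoms) under the approximate posterior.\<close>
definition post_law :: "nat \<Rightarrow> nat \<Rightarrow> real \<Rightarrow> 'a measure
    \<Rightarrow> ((nat \<Rightarrow> real) \<times> (nat \<Rightarrow> 'a)) measure" where
  "post_law n T \<alpha> F = dirichlet (n + T) (dir_params n T \<alpha>) \<Otimes>\<^sub>M PiM {..<T} (\<lambda>_. F)"

end

theory Submission
  imports Defs
begin

text \<open>
  For a posterior draw \<open>P\<close>, the triangle inequality for MMD and the minimality of \<open>\<theta>\<^sup>*(P)\<close> give
  \<open>MMD(P\<^sub>0, P\<^bsub>\<theta>\<^sup>*(P)\<^esub>) \<le> inf\<^sub>\<theta> MMD(P\<^sub>0, P\<^sub>\<theta>) + 2 MMD(P\<^sub>0, P)\<close>, and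
  \<open>MMD(P\<^sub>0, P) \<le> MMD(P\<^sub>0, P\<^sub>n) + MMD(P\<^sub>n, P)\<close> for the empirical measure \<open>P\<^sub>n\<close>. Splitting the
  Dirichlet weights \<open>w\<close> of \<open>P\<close> into those on the data and those on the pseudo-samples bounds
  \<open>MMD(P\<^sub>n, P)\<close> by the square root of the Gram form of the deviations \<open>1/n - w\<^sub>i\<close> plus the
  pseudo-sample mass \<open>1 - \<Sum>\<^sub>i w\<^sub>i\<close>. The expectations of both terms follow from the first two
  Dirichlet moments (and Jensen's inequality for the square root), and \<open>E MMD(P\<^sub>0, P\<^sub>n) \<le> 1/\<surd>n\<close>
  since \<open>E MMD\<^sup>2(P\<^sub>0, P\<^sub>n) = (E k(x,x) - \<langle>\<mu>,\<mu>\<rangle>)/n\<close>.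
\<close>

section \<open>Kernel mean embeddings and the MMD pseudometric\<close>

definition mean_embedding_inner :: "('a \<Rightarrow> 'a \<Rightarrow> real) \<Rightarrow> 'a measure \<Rightarrow> 'a measure \<Rightarrow> real" where
  "mean_embedding_inner k P Q = (\<integral>x. (\<integral>y. k x y \<partial>Q) \<partial>P)"

lemma mmd2_eq_mean_embedding_inner:
  "mmd2 k P Q = mean_embedding_inner k P P - 2 * mean_embedding_inner k P Q + mean_embedding_inner k Q Q"
  by (simp add: mmd2_def mean_embedding_inner_def)

lemma (in prob_space) abs_integral_le_const:
  fixes f :: "'a \<Rightarrow> real"
  assumes "f \<in> borel_measurable M" "AE x in M. \<bar>f x\<bar> \<le> c"
  shows "\<bar>\<integral>x. f x \<partial>M\<bar> \<le> c"
proof -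
  have "integrable M f" using assms by (intro integrable_const_bound[of _ c]) auto
  then have "(\<integral>x. \<bar>f x\<bar> \<partial>M) \<le> c" using assms(2) by (intro integral_le_const) auto
  then show ?thesis using integral_abs_bound[of M f] by linarith
qed

locale bounded_kernel =
  fixes M :: "'a measure" and k :: "'a \<Rightarrow> 'a \<Rightarrow> real"
  assumes kernel_measurable: "(\<lambda>(x, y). k x y) \<in> borel_measurable (M \<Otimes>\<^sub>M M)"
    and kernel_pd: "pd_kernel (space M) k"
    and kernel_bounded: "\<And>x y. x \<in> space M \<Longrightarrow> y \<in> space M \<Longrightarrow> \<bar>k x y\<bar> \<le> 1"
begin

lemma kernel_commute: "x \<in> space M \<Longrightarrow> y \<in> space M \<Longrightarrow> k x y = k y x"
  using kernel_pd by (auto simp: pd_kernel_def)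

lemma kernel_gram_nonneg:
  fixes N :: nat and c :: "nat \<Rightarrow> real" and z :: "nat \<Rightarrow> 'a"
  assumes "\<And>i. i < N \<Longrightarrow> z i \<in> space M"
  shows "0 \<le> (\<Sum>i<N. \<Sum>j<N. c i * c j * k (z i) (z j))"
  using kernel_pd assms unfolding pd_kernel_def by blast

lemma measurable_kernel_pair_measure:
  "sets A = sets M \<Longrightarrow> sets B = sets M \<Longrightarrow> (\<lambda>(x, y). k x y) \<in> borel_measurable (A \<Otimes>\<^sub>M B)"
  using kernel_measurable by (subst measurable_cong_sets[OF sets_pair_measure_cong refl]) auto

lemma measurable_kernel:
  assumes "f \<in> measurable N M" "g \<in> measurable N M"
  shows "(\<lambda>x. k (f x) (g x)) \<in> borel_measurable N"
  using measurable_comp[OF measurable_Pair[OF assms] kernel_measurable] by (simp add: comp_def)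

lemma measurable_kernel_integral:
  assumes "prob_space Q" "sets Q = sets M"
  shows "(\<lambda>x. \<integral>y. k x y \<partial>Q) \<in> borel_measurable M"
proof -
  interpret Q: prob_space Q by fact
  show ?thesis
    by (rule Q.borel_measurable_lebesgue_integral)
      (use measurable_kernel_pair_measure[OF refl assms(2)] in simp)
qed

lemma abs_kernel_integral_le_1:
  assumes "prob_space Q" "sets Q = sets M" "x \<in> space M"
  shows "\<bar>\<integral>y. k x y \<partial>Q\<bar> \<le> 1"
proof (rule prob_space.abs_integral_le_const[OF assms(1)])
  show "(\<lambda>y. k x y) \<in> borel_measurable Q"
    using assms(3) by (intro measurable_kernel measurable_const) (auto simp: measurable_ident_sets[OF assms(2)])
  show "AE y in Q. \<bar>k x y\<bar> \<le> 1"
    using kernel_bounded assms(3) sets_eq_imp_space_eq[OF assms(2)] by (auto intro!: AE_I2)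
qed

lemma abs_mean_embedding_inner_le_1:
  assumes "prob_space P" "sets P = sets M" "prob_space Q" "sets Q = sets M"
  shows "\<bar>mean_embedding_inner k P Q\<bar> \<le> 1"
  unfolding mean_embedding_inner_def
proof (rule prob_space.abs_integral_le_const[OF assms(1)])
  show "(\<lambda>x. \<integral>y. k x y \<partial>Q) \<in> borel_measurable P"
    using measurable_kernel_integral[OF assms(3,4)] by (simp add: measurable_cong_sets[OF assms(2) refl])
  show "AE x in P. \<bar>\<integral>y. k x y \<partial>Q\<bar> \<le> 1"
    using abs_kernel_integral_le_1[OF assms(3,4)] sets_eq_imp_space_eq[OF assms(2)] by (auto intro!: AE_I2)
qed

lemma mean_embedding_inner_commute:
  assumes "prob_space P" "sets P = sets M" "prob_space Q" "sets Q = sets M"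
  shows "mean_embedding_inner k P Q = mean_embedding_inner k Q P"
proof -
  interpret P: prob_space P by fact
  interpret Q: prob_space Q by fact
  interpret PQ: pair_sigma_finite P Q ..
  interpret PQ_prob: prob_space "P \<Otimes>\<^sub>M Q" by (rule prob_space_pair) unfold_locales
  have space: "space P = space M" "space Q = space M"
    using sets_eq_imp_space_eq[OF assms(2)] sets_eq_imp_space_eq[OF assms(4)] by auto
  have "integrable (P \<Otimes>\<^sub>M Q) (\<lambda>(x, y). k x y)"
    using kernel_bounded space measurable_kernel_pair_measure[OF assms(2,4)]
    by (intro PQ_prob.integrable_const_bound[of _ 1]) (auto simp: space_pair_measure)
  then have "mean_embedding_inner k P Q = (\<integral>y. (\<integral>x. k x y \<partial>P) \<partial>Q)"
    unfolding mean_embedding_inner_def by (simp add: PQ.Fubini_integral)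
  also have "\<dots> = (\<integral>y. (\<integral>x. k y x \<partial>P) \<partial>Q)"
    using space kernel_commute by (intro Bochner_Integration.integral_cong refl) auto
  finally show ?thesis by (simp add: mean_embedding_inner_def)
qed

end

lemma distr_PiM_components_pair:
  assumes prob: "\<And>i. i \<in> I \<Longrightarrow> prob_space (Mi i)" and ij: "i \<in> I" "j \<in> I" "i \<noteq> j"
  shows "distr (PiM I Mi) (Mi i \<Otimes>\<^sub>M Mi j) (\<lambda>\<omega>. (\<omega> i, \<omega> j)) = Mi i \<Otimes>\<^sub>M Mi j"
proof (rule pair_measure_eqI[symmetric])
  show "sigma_finite_measure (Mi i)" "sigma_finite_measure (Mi j)"
    using prob ij by (auto intro: prob_space_imp_sigma_finite)
  show "sets (Mi i \<Otimes>\<^sub>M Mi j) = sets (distr (Pi\<^sub>M I Mi) (Mi i \<Otimes>\<^sub>M Mi j) (\<lambda>\<omega>. (\<omega> i, \<omega> j)))"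
    by simp
  fix A B assume A: "A \<in> sets (Mi i)" and B: "B \<in> sets (Mi j)"
  define F where "F = (\<lambda>l. if l = i then A else B)"
  have "(\<lambda>\<omega>. (\<omega> i, \<omega> j)) \<in> measurable (PiM I Mi) (Mi i \<Otimes>\<^sub>M Mi j)"
    using ij by (intro measurable_Pair measurable_component_singleton) auto
  moreover have "(\<lambda>\<omega>. (\<omega> i, \<omega> j)) -` (A \<times> B) \<inter> space (PiM I Mi) = prod_emb I Mi {i, j} (Pi\<^sub>E {i, j} F)"
    using ij by (auto simp: prod_emb_def space_PiM F_def PiE_iff)
  ultimately have "emeasure (distr (PiM I Mi) (Mi i \<Otimes>\<^sub>M Mi j) (\<lambda>\<omega>. (\<omega> i, \<omega> j))) (A \<times> B)
      = emeasure (PiM I Mi) (prod_emb I Mi {i, j} (Pi\<^sub>E {i, j} F))"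
    using A B by (subst emeasure_distr) auto
  also have "\<dots> = (\<Prod>l\<in>{i,j}. emeasure (Mi l) (F l))"
    using ij A B prob by (intro emeasure_PiM_emb) (auto simp: F_def)
  finally show "emeasure (Mi i) A * emeasure (Mi j) B
      = emeasure (distr (PiM I Mi) (Mi i \<Otimes>\<^sub>M Mi j) (\<lambda>\<omega>. (\<omega> i, \<omega> j))) (A \<times> B)"
    using ij by (simp add: F_def)
qed

lemma integral_PiM_components_pair:
  fixes f :: "'a \<Rightarrow> 'a \<Rightarrow> real"
  assumes prob: "\<And>i. i \<in> I \<Longrightarrow> prob_space (Mi i)" and ij: "i \<in> I" "j \<in> I" "i \<noteq> j"
    and f: "(\<lambda>(x, y). f x y) \<in> borel_measurable (Mi i \<Otimes>\<^sub>M Mi j)"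
    and bounded: "\<And>x y. x \<in> space (Mi i) \<Longrightarrow> y \<in> space (Mi j) \<Longrightarrow> \<bar>f x y\<bar> \<le> B"
  shows "(\<integral>\<omega>. f (\<omega> i) (\<omega> j) \<partial>PiM I Mi) = (\<integral>x. (\<integral>y. f x y \<partial>Mi j) \<partial>Mi i)"
proof -
  interpret A: prob_space "Mi i" using prob ij by auto
  interpret B: prob_space "Mi j" using prob ij by auto
  interpret AB: pair_sigma_finite "Mi i" "Mi j" ..
  interpret AB_prob: prob_space "Mi i \<Otimes>\<^sub>M Mi j" by (rule prob_space_pair) unfold_locales
  have "(\<lambda>\<omega>. (\<omega> i, \<omega> j)) \<in> measurable (PiM I Mi) (Mi i \<Otimes>\<^sub>M Mi j)"
    using ij by (intro measurable_Pair measurable_component_singleton) auto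
  then have "(\<integral>\<omega>. f (\<omega> i) (\<omega> j) \<partial>PiM I Mi)
      = (\<integral>p. (\<lambda>(x, y). f x y) p \<partial>distr (PiM I Mi) (Mi i \<Otimes>\<^sub>M Mi j) (\<lambda>\<omega>. (\<omega> i, \<omega> j)))"
    using f by (subst integral_distr) auto
  also have "\<dots> = (\<integral>p. (\<lambda>(x, y). f x y) p \<partial>(Mi i \<Otimes>\<^sub>M Mi j))"
    by (subst distr_PiM_components_pair[OF prob ij]) auto
  also have "\<dots> = (\<integral>x. (\<integral>y. f x y \<partial>Mi j) \<partial>Mi i)"
    using bounded f
    by (intro AB.integral_fst[symmetric] AB_prob.integrable_const_bound[of _ B])
      (auto simp: space_pair_measure)
  finally show ?thesis .
qed

lemma integral_PiM_component:
  fixes f :: "'a \<Rightarrow> real"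
  assumes prob: "\<And>i. i \<in> I \<Longrightarrow> prob_space (Mi i)" and i: "i \<in> I"
    and f: "f \<in> borel_measurable (Mi i)"
  shows "(\<integral>\<omega>. f (\<omega> i) \<partial>PiM I Mi) = (\<integral>x. f x \<partial>Mi i)"
proof -
  have "(\<lambda>\<omega>. \<omega> i) \<in> measurable (PiM I Mi) (Mi i)"
    using i by (intro measurable_component_singleton) auto
  then have "(\<integral>\<omega>. f (\<omega> i) \<partial>PiM I Mi) = (\<integral>x. f x \<partial>distr (PiM I Mi) (Mi i) (\<lambda>\<omega>. \<omega> i))"
    using f by (subst integral_distr) auto
  also have "\<dots> = (\<integral>x. f x \<partial>Mi i)"
    by (subst distr_PiM_component[OF prob i]) auto
  finally show ?thesis .
qed

lemma integral_sum_sum: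
  fixes f :: "'i \<Rightarrow> 'j \<Rightarrow> 'a \<Rightarrow> real"
  assumes "\<And>i j. i \<in> I \<Longrightarrow> j \<in> J \<Longrightarrow> integrable M (f i j)"
  shows "(\<integral>x. (\<Sum>i\<in>I. \<Sum>j\<in>J. f i j x) \<partial>M) = (\<Sum>i\<in>I. \<Sum>j\<in>J. \<integral>x. f i j x \<partial>M)"
  using assms by (simp add: Bochner_Integration.integral_sum Bochner_Integration.integrable_sum)

lemma sum_lessThan_add:
  fixes m n :: nat
  shows "(\<Sum>l<m + n. f l) = (\<Sum>l<m. f l) + (\<Sum>l<n. (f (m + l) :: 'b::comm_monoid_add))"
  by (induction n) (auto simp: add.assoc)

lemma sum_lessThan_mult_mod:
  fixes f :: "nat \<Rightarrow> real"
  shows "(\<Sum>i<N * m. f (i mod m)) = real N * (\<Sum>a<m. f a)"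
proof (induction N)
  case (Suc N)
  have "(\<Sum>i<N * m + m. f (i mod m)) = (\<Sum>i<N * m. f (i mod m)) + (\<Sum>a<m. f a)"
    by (simp add: sum_lessThan_add)
  then show ?case using Suc by (simp add: algebra_simps)
qed simp

lemma sum_sum_lessThan_mult_mod:
  fixes f :: "nat \<Rightarrow> nat \<Rightarrow> real"
  shows "(\<Sum>i<N * m. \<Sum>j<N * m. f (i mod m) (j mod m)) = real N * real N * (\<Sum>a<m. \<Sum>b<m. f a b)"
proof -
  have inner: "(\<Sum>j<N * m. f (i mod m) (j mod m)) = real N * (\<Sum>b<m. f (i mod m) b)" for i
    using sum_lessThan_mult_mod[where f = "f (i mod m)"] .
  have outer: "(\<Sum>i<N * m. \<Sum>b<m. f (i mod m) b) = real N * (\<Sum>a<m. \<Sum>b<m. f a b)"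
    using sum_lessThan_mult_mod[where f = "\<lambda>a. \<Sum>b<m. f a b"] .
  show ?thesis by (simp add: inner outer flip: sum_distrib_left)
qed

context bounded_kernel
begin

lemma integral_kernel_PiM_components:
  assumes prob: "\<And>i. i \<in> I \<Longrightarrow> prob_space (Mi i)" and sets: "\<And>i. i \<in> I \<Longrightarrow> sets (Mi i) = sets M"
    and ij: "i \<in> I" "j \<in> I"
  shows "(\<integral>\<omega>. k (\<omega> i) (\<omega> j) \<partial>PiM I Mi) =
    (if i = j then (\<integral>x. k x x \<partial>Mi i) else mean_embedding_inner k (Mi i) (Mi j))"
proof (cases "i = j")
  case True
  have "(\<lambda>x. k x x) \<in> borel_measurable (Mi i)"
    by (intro measurable_kernel) (auto simp: measurable_ident_sets[OF sets[OF ij(1)]])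
  then show ?thesis using True integral_PiM_component[OF prob ij(1)] by simp
next
  case False
  have "\<bar>k x y\<bar> \<le> 1" if "x \<in> space (Mi i)" "y \<in> space (Mi j)" for x y
    using that kernel_bounded sets_eq_imp_space_eq[OF sets[OF ij(1)]] sets_eq_imp_space_eq[OF sets[OF ij(2)]]
    by auto
  from integral_PiM_components_pair[OF prob ij False
      measurable_kernel_pair_measure[OF sets[OF ij(1)] sets[OF ij(2)]] this]
  show ?thesis
    using False by (simp add: mean_embedding_inner_def)
qed

lemma integral_gram_PiM_mod:
  fixes P :: "nat \<Rightarrow> 'a measure" and c :: "nat \<Rightarrow> real" and m N :: nat
  assumes prob: "\<And>a. a < m \<Longrightarrow> prob_space (P a)" and sets: "\<And>a. a < m \<Longrightarrow> sets (P a) = sets M"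
    and "m > 0"
  shows "(\<integral>\<omega>. (\<Sum>i<N * m. \<Sum>j<N * m. c (i mod m) * c (j mod m) * k (\<omega> i) (\<omega> j))
        \<partial>PiM {..<N * m} (\<lambda>i. P (i mod m)))
    = real N * real N * (\<Sum>a<m. \<Sum>b<m. c a * c b * mean_embedding_inner k (P a) (P b))
      + real N * (\<Sum>a<m. c a * c a * ((\<integral>x. k x x \<partial>P a) - mean_embedding_inner k (P a) (P a)))"
proof -
  define I where "I = {..<N * m}"
  define Q where "Q = (\<lambda>i. P (i mod m))"
  define K where "K = (\<lambda>a b. mean_embedding_inner k (P a) (P b))"
  define D where "D = (\<lambda>a. \<integral>x. k x x \<partial>P a)"
  have probQ: "\<And>i. prob_space (Q i)" and setsQ: "\<And>i. sets (Q i) = sets M"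
    using prob sets \<open>m > 0\<close> by (simp_all add: Q_def)
  interpret PI: prob_space "PiM I Q" using probQ by (intro prob_space_PiM) auto
  have integrable: "integrable (PiM I Q) (\<lambda>\<omega>. c (i mod m) * c (j mod m) * k (\<omega> i) (\<omega> j))"
    if "i \<in> I" "j \<in> I" for i j
  proof -
    have "(\<lambda>\<omega>. \<omega> l) \<in> measurable (PiM I Q) M" if "l \<in> I" for l
      using that measurable_component_singleton[of l I Q] by (simp add: measurable_cong_sets[OF refl setsQ])
    moreover have "\<omega> l \<in> space M" if "\<omega> \<in> space (PiM I Q)" "l \<in> I" for \<omega> l
      using that sets_eq_imp_space_eq[OF setsQ] by (auto simp: space_PiM PiE_iff)
    ultimately show ?thesis
      using that kernel_bounded
      by (intro integrable_mult_right PI.integrable_const_bound[of _ 1]) (auto intro!: measurable_kernel)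
  qed
  have "(\<integral>\<omega>. (\<Sum>i\<in>I. \<Sum>j\<in>I. c (i mod m) * c (j mod m) * k (\<omega> i) (\<omega> j)) \<partial>PiM I Q)
      = (\<Sum>i\<in>I. \<Sum>j\<in>I. c (i mod m) * c (j mod m) * (\<integral>\<omega>. k (\<omega> i) (\<omega> j) \<partial>PiM I Q))"
    using integrable by (simp add: integral_sum_sum)
  also have "\<dots> = (\<Sum>i\<in>I. \<Sum>j\<in>I. c (i mod m) * c (j mod m) * K (i mod m) (j mod m)
      + (if i = j then c (i mod m) * c (i mod m) * (D (i mod m) - K (i mod m) (i mod m)) else 0))"
    using probQ setsQ
    by (intro sum.cong refl) (simp add: integral_kernel_PiM_components Q_def K_def D_def algebra_simps)
  also have "\<dots> = (\<Sum>i\<in>I. \<Sum>j\<in>I. c (i mod m) * c (j mod m) * K (i mod m) (j mod m))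
      + (\<Sum>i\<in>I. c (i mod m) * c (i mod m) * (D (i mod m) - K (i mod m) (i mod m)))"
    by (simp add: sum.distrib I_def)
  also have "\<dots> = real N * real N * (\<Sum>a<m. \<Sum>b<m. c a * c b * K a b)
      + real N * (\<Sum>a<m. c a * c a * (D a - K a a))"
    unfolding I_def
    by (simp only: sum_sum_lessThan_mult_mod[where f = "\<lambda>a b. c a * c b * K a b"]
        sum_lessThan_mult_mod[where f = "\<lambda>a. c a * c a * (D a - K a a)"])
  finally show ?thesis by (simp add: I_def Q_def K_def D_def)
qed

text \<open>Without an RKHS at hand, positive semidefiniteness of the Gram matrix of mean embeddings
  is obtained by sampling: the Gram form of \<open>k\<close> at \<open>N\<close> independent draws from each \<open>P a\<close> is
  nonnegative, and by the previous lemma its expectation is \<open>N\<^sup>2 Q + N R\<close>, where \<open>Q\<close> is the Gram form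
  of the mean embeddings; letting \<open>N \<rightarrow> \<infinity>\<close> gives \<open>Q \<ge> 0\<close>.\<close>

lemma mean_embedding_gram_nonneg:
  fixes P :: "nat \<Rightarrow> 'a measure" and c :: "nat \<Rightarrow> real" and m :: nat
  assumes prob: "\<And>a. a < m \<Longrightarrow> prob_space (P a)" and sets: "\<And>a. a < m \<Longrightarrow> sets (P a) = sets M"
  shows "0 \<le> (\<Sum>a<m. \<Sum>b<m. c a * c b * mean_embedding_inner k (P a) (P b))"
    (is "0 \<le> ?Q")
proof (cases "m = 0")
  case False
  define R where "R = (\<Sum>a<m. c a * c a * ((\<integral>x. k x x \<partial>P a) - mean_embedding_inner k (P a) (P a)))"
  have sample_gram: "0 \<le> real N * real N * ?Q + real N * R" for N
  proof -
    have "\<omega> i \<in> space M" if "\<omega> \<in> space (PiM {..<N * m} (\<lambda>i. P (i mod m)))" "i < N * m" for \<omega> i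
      using that sets_eq_imp_space_eq[OF sets] False by (auto simp: space_PiM PiE_iff)
    then have "0 \<le> (\<integral>\<omega>. (\<Sum>i<N * m. \<Sum>j<N * m. c (i mod m) * c (j mod m) * k (\<omega> i) (\<omega> j))
        \<partial>PiM {..<N * m} (\<lambda>i. P (i mod m)))"
      by (intro Bochner_Integration.integral_nonneg kernel_gram_nonneg) auto
    then show ?thesis
      using integral_gram_PiM_mod[where P = P and m = m and c = c and N = N, OF prob sets] False
      by (simp add: R_def)
  qed
  show ?thesis
  proof (rule ccontr)
    assume "\<not> 0 \<le> ?Q"
    obtain N :: nat where N: "max 1 (R / - ?Q) < real N"
      using reals_Archimedean2 by blast
    then have "0 < real N" and "real N * ?Q + R < 0"
      using \<open>\<not> 0 \<le> ?Q\<close> by (auto simp: field_simps)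
    moreover have "0 \<le> real N * (real N * ?Q + R)"
      using sample_gram[of N] by (simp add: algebra_simps)
    ultimately show False by (simp add: zero_le_mult_iff)
  qed
qed simp

end

definition quad_form :: "nat \<Rightarrow> (nat \<Rightarrow> nat \<Rightarrow> real) \<Rightarrow> (nat \<Rightarrow> real) \<Rightarrow> real" where
  "quad_form m G c = (\<Sum>a<m. \<Sum>b<m. c a * c b * G a b)"

lemma nonneg_quadratic_discriminant:
  fixes a b c :: real
  assumes nonneg: "\<And>t. 0 \<le> a + t * b + t\<^sup>2 * c" and "c \<ge> 0"
  shows "b\<^sup>2 \<le> 4 * a * c"
proof (cases "c = 0")
  case True
  have "b = 0"
  proof (rule ccontr)
    assume "b \<noteq> 0"
    then show False using nonneg[of "- (a + 1) / b"] True by simp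
  qed
  then show ?thesis using True by simp
next
  case False
  then have "c > 0" using \<open>c \<ge> 0\<close> by simp
  have "0 \<le> a + (- b / (2 * c)) * b + (- b / (2 * c))\<^sup>2 * c" by (rule nonneg)
  also have "\<dots> = a - b\<^sup>2 / (4 * c)" using \<open>c > 0\<close> by (simp add: field_simps power2_eq_square)
  finally show ?thesis using \<open>c > 0\<close> by (simp add: field_simps)
qed

lemma quad_form_add_scaled:
  "quad_form m G (\<lambda>a. u a + t * v a)
    = quad_form m G u + t * (\<Sum>a<m. \<Sum>b<m. (u a * v b + v a * u b) * G a b) + t\<^sup>2 * quad_form m G v"
proof -
  have "\<And>a b. (u a + t * v a) * (u b + t * v b) * G a b
      = u a * u b * G a b + t * ((u a * v b + v a * u b) * G a b) + t\<^sup>2 * (v a * v b * G a b)"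
    by (simp add: algebra_simps power2_eq_square)
  then show ?thesis unfolding quad_form_def by (simp add: sum.distrib sum_distrib_left)
qed

lemma sqrt_quad_form_add_le:
  assumes psd: "\<And>c. 0 \<le> quad_form m G c"
  shows "sqrt (quad_form m G (\<lambda>a. u a + v a)) \<le> sqrt (quad_form m G u) + sqrt (quad_form m G v)"
proof -
  define B where "B = (\<Sum>a<m. \<Sum>b<m. (u a * v b + v a * u b) * G a b)"
  have expand: "\<And>t. quad_form m G (\<lambda>a. u a + t * v a) = quad_form m G u + t * B + t\<^sup>2 * quad_form m G v"
    unfolding B_def by (rule quad_form_add_scaled)
  have "B\<^sup>2 \<le> 4 * quad_form m G u * quad_form m G v"
    using psd by (intro nonneg_quadratic_discriminant) (auto simp flip: expand)
  then have "sqrt (B\<^sup>2) \<le> sqrt (4 * quad_form m G u * quad_form m G v)"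
    by (rule real_sqrt_le_mono)
  then have "B \<le> 2 * sqrt (quad_form m G u) * sqrt (quad_form m G v)"
    by (simp add: real_sqrt_mult)
  then have "quad_form m G (\<lambda>a. u a + v a) \<le> (sqrt (quad_form m G u) + sqrt (quad_form m G v))\<^sup>2"
    using expand[of 1] psd[of u] psd[of v] by (simp add: power2_eq_square algebra_simps)
  then show ?thesis
    using real_sqrt_le_mono psd[of u] psd[of v] by fastforce
qed

lemma sqrt_quad_form_le_sum_abs:
  assumes "\<And>a b. a < m \<Longrightarrow> b < m \<Longrightarrow> \<bar>G a b\<bar> \<le> 1"
  shows "sqrt (quad_form m G c) \<le> (\<Sum>a<m. \<bar>c a\<bar>)"
proof -
  have "quad_form m G c \<le> (\<Sum>a<m. \<Sum>b<m. \<bar>c a\<bar> * \<bar>c b\<bar>)"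
    unfolding quad_form_def
  proof (intro sum_mono)
    fix a b assume "a \<in> {..<m}" "b \<in> {..<m}"
    then have "\<bar>c a * c b * G a b\<bar> \<le> \<bar>c a\<bar> * \<bar>c b\<bar>"
      using assms by (simp add: abs_mult mult_left_le)
    then show "c a * c b * G a b \<le> \<bar>c a\<bar> * \<bar>c b\<bar>" by linarith
  qed
  also have "\<dots> = (\<Sum>a<m. \<bar>c a\<bar>)\<^sup>2" by (simp add: power2_eq_square sum_product)
  finally have "sqrt (quad_form m G c) \<le> sqrt ((\<Sum>a<m. \<bar>c a\<bar>)\<^sup>2)" by (rule real_sqrt_le_mono)
  also have "\<dots> = (\<Sum>a<m. \<bar>c a\<bar>)" by (simp add: sum_nonneg)
  finally show ?thesis .
qed

context bounded_kernel
begin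

lemma mmd2_nonneg:
  assumes "prob_space P" "sets P = sets M" "prob_space Q" "sets Q = sets M"
  shows "0 \<le> mmd2 k P Q"
proof -
  define R where "R = (\<lambda>a::nat. if a = 0 then P else Q)"
  define c where "c = (\<lambda>a::nat. if a = 0 then 1 else - 1 :: real)"
  have "0 \<le> (\<Sum>a<2. \<Sum>b<2. c a * c b * mean_embedding_inner k (R a) (R b))"
    using assms by (intro mean_embedding_gram_nonneg) (auto simp: R_def)
  also have "\<dots> = mmd2 k P Q"
    using mean_embedding_inner_commute[OF assms]
    by (simp add: R_def c_def eval_nat_numeral mmd2_eq_mean_embedding_inner)
  finally show ?thesis .
qed

lemma mmd_nonneg:
  assumes "prob_space P" "sets P = sets M" "prob_space Q" "sets Q = sets M"
  shows "0 \<le> mmd k P Q"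
  using mmd2_nonneg[OF assms] by (simp add: mmd_def)

lemma mmd_le_2:
  assumes "prob_space P" "sets P = sets M" "prob_space Q" "sets Q = sets M"
  shows "mmd k P Q \<le> 2"
proof -
  have "mmd2 k P Q \<le> 2\<^sup>2"
    using abs_mean_embedding_inner_le_1[OF assms(1,2,1,2)] abs_mean_embedding_inner_le_1[OF assms]
      abs_mean_embedding_inner_le_1[OF assms(3,4,3,4)]
    unfolding mmd2_eq_mean_embedding_inner abs_le_iff by simp
  then show ?thesis
    unfolding mmd_def using real_sqrt_le_mono by fastforce
qed

lemma mmd_commute:
  assumes "prob_space P" "sets P = sets M" "prob_space Q" "sets Q = sets M"
  shows "mmd k P Q = mmd k Q P"
  using mean_embedding_inner_commute[OF assms] by (simp add: mmd_def mmd2_eq_mean_embedding_inner)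

lemma mmd_triangle:
  assumes A: "prob_space A" "sets A = sets M" and B: "prob_space B" "sets B = sets M"
    and C: "prob_space C" "sets C = sets M"
  shows "mmd k A C \<le> mmd k A B + mmd k B C"
proof -
  define R where "R = (\<lambda>a::nat. if a = 0 then A else if a = 1 then B else C)"
  define G where "G = (\<lambda>a b. mean_embedding_inner k (R a) (R b))"
  have psd: "\<And>c. 0 \<le> quad_form 3 G c"
    unfolding quad_form_def G_def using A B C by (intro mean_embedding_gram_nonneg) (auto simp: R_def)
  define u where "u = (\<lambda>a::nat. if a = 0 then 1 else if a = 1 then - 1 else 0 :: real)"
  define v where "v = (\<lambda>a::nat. if a = 0 then 0 else if a = 1 then 1 else - 1 :: real)"
  have "mean_embedding_inner k B A = mean_embedding_inner k A B"
    "mean_embedding_inner k C A = mean_embedding_inner k A C"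
    "mean_embedding_inner k C B = mean_embedding_inner k B C"
    using mean_embedding_inner_commute A B C by auto
  then have "quad_form 3 G u = mmd2 k A B" "quad_form 3 G v = mmd2 k B C"
    "quad_form 3 G (\<lambda>a. u a + v a) = mmd2 k A C"
    by (simp_all add: quad_form_def G_def R_def u_def v_def eval_nat_numeral mmd2_eq_mean_embedding_inner)
  then show ?thesis using sqrt_quad_form_add_le[OF psd, of u v] by (simp add: mmd_def)
qed

end

section \<open>Weighted point measures\<close>

lemma measurable_density_count_space:
  "\<forall>i<N. z i \<in> space M \<Longrightarrow> z \<in> measurable (density (count_space {..<N}) f) M"
  by (subst measurable_cong_sets[OF sets_density refl]) (auto simp: measurable_count_space_eq1)

lemma wpm_eq_distr_density:
  assumes z: "\<forall>i<N. z i \<in> space M"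
  shows "wpm M N z w = distr (density (count_space {..<N}) (\<lambda>i. ennreal (w i))) M z"
    (is "_ = distr ?W M z")
proof -
  have "emeasure (distr ?W M z) A = (\<Sum>i<N. ennreal (w i) * indicator A (z i))" if "A \<in> sets M" for A
  proof -
    have "emeasure (distr ?W M z) A = (\<integral>\<^sup>+i. ennreal (w i) * indicator (z -` A \<inter> {..<N}) i \<partial>count_space {..<N})"
      using measurable_density_count_space[OF z] that by (simp add: emeasure_distr emeasure_density)
    also have "\<dots> = (\<Sum>i<N. ennreal (w i) * indicator A (z i))"
      by (subst nn_integral_count_space_finite) (auto intro!: sum.cong simp: indicator_def)
    finally show ?thesis .
  qed
  then have "measure_of (space M) (sets M) (\<lambda>A. \<Sum>i<N. ennreal (w i) * indicator A (z i))
      = measure_of (space M) (sets M) (emeasure (distr ?W M z))"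
    by (intro measure_of_eq sets.space_closed) (simp add: sets.sigma_sets_eq)
  also have "\<dots> = distr ?W M z"
    using measure_of_of_measure[of "distr ?W M z"] by simp
  finally show ?thesis by (simp add: wpm_def)
qed

lemma sets_wpm: "\<forall>i<N. z i \<in> space M \<Longrightarrow> sets (wpm M N z w) = sets M"
  by (simp add: wpm_eq_distr_density)

lemma space_wpm: "\<forall>i<N. z i \<in> space M \<Longrightarrow> space (wpm M N z w) = space M"
  by (simp add: wpm_eq_distr_density)

lemma integral_wpm:
  fixes f :: "'a \<Rightarrow> real"
  assumes z: "\<forall>i<N. z i \<in> space M" and w: "\<forall>i<N. 0 \<le> w i" and f: "f \<in> borel_measurable M"
  shows "(\<integral>x. f x \<partial>wpm M N z w) = (\<Sum>i<N. w i * f (z i))"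
proof -
  have "(\<integral>x. f x \<partial>wpm M N z w) = (\<integral>i. f (z i) \<partial>density (count_space {..<N}) (\<lambda>i. ennreal (w i)))"
    using measurable_density_count_space[OF z] f by (simp add: wpm_eq_distr_density[OF z] integral_distr)
  also have "\<dots> = (\<integral>i. w i *\<^sub>R f (z i) \<partial>count_space {..<N})"
    using w by (subst integral_density) (auto simp: AE_count_space)
  also have "\<dots> = (\<Sum>i<N. w i * f (z i))"
    by (simp add: lebesgue_integral_count_space_finite)
  finally show ?thesis .
qed

lemma prob_space_wpm:
  assumes z: "\<forall>i<N. z i \<in> space M" and w: "\<forall>i<N. 0 \<le> w i" and sum_w: "(\<Sum>i<N. w i) = 1"
  shows "prob_space (wpm M N z w)"
proof
  have "z -` space M \<inter> {..<N} = {..<N}" using z by auto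
  then have "emeasure (wpm M N z w) (space M) = (\<Sum>i<N. ennreal (w i))"
    using measurable_density_count_space[OF z]
    by (simp add: wpm_eq_distr_density[OF z] emeasure_distr emeasure_density nn_integral_count_space_finite)
  also have "\<dots> = ennreal (\<Sum>i<N. w i)" using w by (intro sum_ennreal) auto
  also have "\<dots> = 1" using sum_w by simp
  finally show "emeasure (wpm M N z w) (space (wpm M N z w)) = 1" by (simp add: space_wpm[OF z])
qed

lemma wpm_atoms_uniform:
  "wpm M (n + T) (atoms n xs xt) (\<lambda>l. if l < n then 1 / real n else 0) = wpm M n xs (\<lambda>_. 1 / real n)"
  unfolding wpm_def by (simp add: sum_lessThan_add atoms_def)

context bounded_kernel
begin

lemma mean_embedding_inner_wpm:
  assumes z: "\<forall>i<N. z i \<in> space M" and w: "\<forall>i<N. 0 \<le> w i"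
    and Q: "prob_space Q" "sets Q = sets M"
  shows "mean_embedding_inner k (wpm M N z w) Q = (\<Sum>i<N. w i * (\<integral>y. k (z i) y \<partial>Q))"
  unfolding mean_embedding_inner_def by (rule integral_wpm[OF z w measurable_kernel_integral[OF Q]])

lemma mean_embedding_inner_wpm_wpm:
  assumes z: "\<forall>i<N. z i \<in> space M" and w: "\<forall>i<N. 0 \<le> w i" and v: "\<forall>i<N. 0 \<le> v i"
  shows "mean_embedding_inner k (wpm M N z w) (wpm M N z v) = (\<Sum>i<N. \<Sum>j<N. w i * v j * k (z i) (z j))"
proof -
  have inner: "(\<integral>y. k x y \<partial>wpm M N z v) = (\<Sum>j<N. v j * k x (z j))" if "x \<in> space M" for x
    using z v that by (intro integral_wpm) (auto intro!: measurable_kernel)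
  have "(\<lambda>x. \<Sum>j<N. v j * k x (z j)) \<in> borel_measurable M"
    using z by (intro borel_measurable_sum borel_measurable_times measurable_const measurable_kernel) auto
  then have "(\<lambda>x. \<integral>y. k x y \<partial>wpm M N z v) \<in> borel_measurable M"
    by (simp add: measurable_cong[OF inner])
  then have "mean_embedding_inner k (wpm M N z w) (wpm M N z v) = (\<Sum>i<N. w i * (\<integral>y. k (z i) y \<partial>wpm M N z v))"
    unfolding mean_embedding_inner_def by (rule integral_wpm[OF z w])
  also have "\<dots> = (\<Sum>i<N. w i * (\<Sum>j<N. v j * k (z i) (z j)))"
    using z by (simp add: inner)
  finally show ?thesis by (simp add: sum_distrib_left mult.assoc)
qed

lemma mmd2_wpm_wpm:
  assumes z: "\<forall>i<N. z i \<in> space M"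
    and u: "\<forall>i<N. 0 \<le> u i" "(\<Sum>i<N. u i) = 1" and w: "\<forall>i<N. 0 \<le> w i" "(\<Sum>i<N. w i) = 1"
  shows "mmd2 k (wpm M N z u) (wpm M N z w) = quad_form N (\<lambda>a b. k (z a) (z b)) (\<lambda>a. u a - w a)"
proof -
  define K where "K = (\<lambda>v v'. \<Sum>a<N. \<Sum>b<N. v a * v' b * k (z a) (z b))"
  have "quad_form N (\<lambda>a b. k (z a) (z b)) (\<lambda>a. u a - w a) = K u u - K u w - (K w u - K w w)"
    unfolding quad_form_def K_def by (simp add: left_diff_distrib right_diff_distrib sum_subtractf)
  moreover have "mean_embedding_inner k (wpm M N z w) (wpm M N z u)
      = mean_embedding_inner k (wpm M N z u) (wpm M N z w)"
    using z u w by (intro mean_embedding_inner_commute) (simp_all add: prob_space_wpm sets_wpm)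
  ultimately show ?thesis
    using mean_embedding_inner_wpm_wpm[OF z] u w by (simp add: mmd2_eq_mean_embedding_inner K_def)
qed

end

section \<open>Gamma and Dirichlet distributions\<close>

lemma Gamma_real_nonzero [simp]: "x > (0::real) \<Longrightarrow> Gamma x \<noteq> 0"
  using Gamma_real_pos[of x] by linarith

lemma Gamma_real_plus1: "x > (0::real) \<Longrightarrow> Gamma (x + 1) = x * Gamma x"
  by (rule Gamma_plus1) (auto elim!: nonpos_Ints_cases)

lemma nn_integral_powr_exp_eq_Gamma:
  fixes p u :: real
  assumes p: "p > 0" and u: "u > 0"
  shows "(\<integral>\<^sup>+x. ennreal (indicator {0<..} x * x powr (p - 1) * exp (- (u * x))) \<partial>lborel)
    = ennreal (Gamma p / u powr p)"
proof -
  define F where "F = (\<lambda>t::real. ennreal (indicator {0<..} t * t powr (p - 1) * exp (- t)))"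
  define I where "I = (\<integral>\<^sup>+x. ennreal (indicator {0<..} x * x powr (p - 1) * exp (- (u * x))) \<partial>lborel)"
  have "ennreal (Gamma p) = (\<integral>\<^sup>+t. ennreal (indicator {0..} t * t powr (p - 1) / exp t) \<partial>lborel)"
    using Gamma_conv_nn_integral_real[OF p] by simp
  also have "\<dots> = integral\<^sup>N lborel F"
    unfolding F_def by (intro nn_integral_cong) (auto simp: indicator_def exp_minus field_simps)
  also have "\<dots> = ennreal u * (\<integral>\<^sup>+x. F (0 + u * x) \<partial>lborel)"
    using u by (subst nn_integral_real_affine[where c = u and t = 0]) (auto simp: F_def)
  also have "(\<integral>\<^sup>+x. F (0 + u * x) \<partial>lborel) = (\<integral>\<^sup>+x. ennreal (u powr (p - 1))
      * ennreal (indicator {0<..} x * x powr (p - 1) * exp (- (u * x))) \<partial>lborel)"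
    unfolding F_def using u
    by (intro nn_integral_cong)
      (auto simp: indicator_def powr_mult ennreal_mult'[symmetric] zero_less_mult_iff mult_ac)
  also have "\<dots> = ennreal (u powr (p - 1)) * I"
    unfolding I_def by (rule nn_integral_cmult) simp
  finally have Gamma_eq: "ennreal (Gamma p) = ennreal (u powr p) * I"
    using u by (simp add: mult.assoc[symmetric] ennreal_mult'[symmetric] powr_mult_base)
  have "I = ennreal (1 / u powr p) * (ennreal (u powr p) * I)"
    using u by (simp add: mult.assoc[symmetric] ennreal_mult'[symmetric])
  also have "\<dots> = ennreal (Gamma p / u powr p)"
    unfolding Gamma_eq[symmetric] using u by (simp add: ennreal_mult'[symmetric])
  finally show ?thesis unfolding I_def .
qed

definition gamma_density :: "real \<Rightarrow> real \<Rightarrow> real" where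
  "gamma_density a x = (if x > 0 then x powr (a - 1) * exp (- x) / Gamma a else 0)"

lemma gamma_measure_eq_density: "gamma_measure a = density lborel (\<lambda>x. ennreal (gamma_density a x))"
  by (simp add: gamma_measure_def gamma_density_def)

lemma borel_measurable_gamma_density [measurable]: "gamma_density a \<in> borel_measurable borel"
  unfolding gamma_density_def by measurable

lemma sets_gamma_measure [simp, measurable_cong]: "sets (gamma_measure a) = sets borel"
  by (simp add: gamma_measure_eq_density)

lemma space_gamma_measure [simp]: "space (gamma_measure a) = UNIV"
  by (simp add: gamma_measure_eq_density)

lemma nn_integral_gamma_measure_power_exp:
  fixes a t :: real and m :: nat
  assumes a: "a > 0" and t: "t \<ge> 0"
  shows "(\<integral>\<^sup>+x. ennreal (x ^ m * exp (- (t * x))) \<partial>gamma_measure a)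
     = ennreal (Gamma (a + real m) / (Gamma a * (1 + t) powr (a + real m)))"
proof -
  have density: "ennreal (gamma_density a x) * ennreal (x ^ m * exp (- (t * x)))
      = ennreal (1 / Gamma a) * ennreal (indicator {0<..} x * x powr (a + real m - 1) * exp (- ((1 + t) * x)))"
    for x :: real
  proof (cases "x > 0")
    case True
    have "x powr (a - 1) * x ^ m = x powr (a + real m - 1)"
      using True by (simp add: powr_realpow[symmetric] powr_add[symmetric] algebra_simps)
    moreover have "exp (- x) * exp (- (t * x)) = exp (- ((1 + t) * x))"
      by (simp add: exp_add[symmetric] algebra_simps)
    ultimately have "gamma_density a x * (x ^ m * exp (- (t * x)))
        = 1 / Gamma a * (x powr (a + real m - 1) * exp (- ((1 + t) * x)))"
      using True by (simp add: gamma_density_def field_simps) (metis mult.assoc mult.commute)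
    then show ?thesis using True a by (simp add: ennreal_mult'[symmetric] gamma_density_def)
  qed (simp add: gamma_density_def)
  have "(\<integral>\<^sup>+x. ennreal (x ^ m * exp (- (t * x))) \<partial>gamma_measure a)
      = (\<integral>\<^sup>+x. ennreal (1 / Gamma a) * ennreal (indicator {0<..} x * x powr (a + real m - 1) * exp (- ((1 + t) * x))) \<partial>lborel)"
    unfolding gamma_measure_eq_density by (simp add: nn_integral_density density)
  also have "\<dots> = ennreal (1 / Gamma a) * ennreal (Gamma (a + real m) / (1 + t) powr (a + real m))"
    using a t by (subst nn_integral_cmult) (auto simp: nn_integral_powr_exp_eq_Gamma)
  finally show ?thesis
    using a t by (simp add: ennreal_mult'[symmetric])
qed

lemma prob_space_gamma_measure: "a > 0 \<Longrightarrow> prob_space (gamma_measure a)"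
  using nn_integral_gamma_measure_power_exp[of a 0 0]
  by (intro prob_spaceI) (simp add: nn_integral_const)

lemma AE_gamma_measure_pos: "AE x in gamma_measure a. x > 0"
  unfolding gamma_measure_eq_density by (subst AE_density) (auto simp: gamma_density_def)

text \<open>Proved by writing \<open>(1 + t) powr -(A + q)\<close> as a Gamma integral and exchanging the order of
  integration.\<close>

lemma nn_integral_beta_prime:
  fixes q A :: real
  assumes q: "q > 0" and A: "A > 0"
  shows "(\<integral>\<^sup>+t. ennreal (indicator {0<..} t * t powr (q - 1) / (1 + t) powr (A + q)) \<partial>lborel)
     = ennreal (Gamma q * Gamma A / Gamma (A + q))"
proof -
  define H where "H = (\<lambda>t s::real. ennreal (indicator {0<..} t * t powr (q - 1) / Gamma (A + q)
    * (indicator {0<..} s * s powr (A + q - 1) * exp (- ((1 + t) * s)))))"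
  have H_measurable: "(\<lambda>(s, t). H t s) \<in> borel_measurable (lborel \<Otimes>\<^sub>M lborel)"
    unfolding H_def by measurable
  have integral_s: "(\<integral>\<^sup>+s. H t s \<partial>lborel) = ennreal (indicator {0<..} t * t powr (q - 1) / (1 + t) powr (A + q))"
    for t
  proof (cases "t > 0")
    case True
    have "(\<integral>\<^sup>+s. H t s \<partial>lborel) = (\<integral>\<^sup>+s. ennreal (t powr (q - 1) / Gamma (A + q))
        * ennreal (indicator {0<..} s * s powr (A + q - 1) * exp (- ((1 + t) * s))) \<partial>lborel)"
      unfolding H_def using True A q by (intro nn_integral_cong) (simp add: ennreal_mult'[symmetric])
    also have "\<dots> = ennreal (t powr (q - 1) / Gamma (A + q)) * ennreal (Gamma (A + q) / (1 + t) powr (A + q))"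
      using True A q by (subst nn_integral_cmult) (auto simp: nn_integral_powr_exp_eq_Gamma)
    finally show ?thesis using True A q by (simp add: ennreal_mult'[symmetric])
  qed (simp add: H_def)
  have integral_t: "(\<integral>\<^sup>+t. H t s \<partial>lborel)
      = ennreal (Gamma q / Gamma (A + q)) * ennreal (indicator {0<..} s * s powr (A - 1) * exp (- (1 * s)))"
    for s
  proof (cases "s > 0")
    case True
    have "(\<integral>\<^sup>+t. H t s \<partial>lborel) = (\<integral>\<^sup>+t. ennreal (s powr (A + q - 1) * exp (- s) / Gamma (A + q))
        * ennreal (indicator {0<..} t * t powr (q - 1) * exp (- (s * t))) \<partial>lborel)"
      unfolding H_def using True A q
      by (intro nn_integral_cong) (simp add: ennreal_mult'[symmetric] exp_add[symmetric] algebra_simps)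
    also have "\<dots> = ennreal (s powr (A + q - 1) * exp (- s) / Gamma (A + q)) * ennreal (Gamma q / s powr q)"
      using True A q by (subst nn_integral_cmult) (auto simp: nn_integral_powr_exp_eq_Gamma)
    also have "\<dots> = ennreal (Gamma q / Gamma (A + q)) * ennreal (indicator {0<..} s * s powr (A - 1) * exp (- (1 * s)))"
    proof -
      have "s powr (A + q - 1) = s powr (A - 1) * s powr q"
        using True by (simp add: powr_add[symmetric] algebra_simps)
      then have "s powr (A + q - 1) * exp (- s) / Gamma (A + q) * (Gamma q / s powr q)
          = Gamma q / Gamma (A + q) * (s powr (A - 1) * exp (- s))"
        using True by (simp add: field_simps)
      then show ?thesis using True A q by (simp add: ennreal_mult'[symmetric])
    qed
    finally show ?thesis .
  qed (simp add: H_def)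
  have "(\<integral>\<^sup>+t. ennreal (indicator {0<..} t * t powr (q - 1) / (1 + t) powr (A + q)) \<partial>lborel)
      = (\<integral>\<^sup>+t. (\<integral>\<^sup>+s. H t s \<partial>lborel) \<partial>lborel)"
    by (simp add: integral_s)
  also have "\<dots> = (\<integral>\<^sup>+s. (\<integral>\<^sup>+t. H t s \<partial>lborel) \<partial>lborel)"
    using pair_sigma_finite.Fubini'[where f = "\<lambda>s t. H t s", OF _ H_measurable]
    by (simp add: lborel.sigma_finite_measure_axioms pair_sigma_finite.intro)
  also have "\<dots> = ennreal (Gamma q / Gamma (A + q)) * ennreal (Gamma A / 1 powr A)"
    using A nn_integral_powr_exp_eq_Gamma[OF A, of 1] by (simp add: integral_t nn_integral_cmult)
  finally show ?thesis
    using A q by (simp add: ennreal_mult'[symmetric])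
qed

definition gamma_vector :: "nat \<Rightarrow> (nat \<Rightarrow> real) \<Rightarrow> (nat \<Rightarrow> real) measure" where
  "gamma_vector N a = PiM {..<N} (\<lambda>i. gamma_measure (a i))"

definition normalise :: "nat \<Rightarrow> (nat \<Rightarrow> real) \<Rightarrow> (nat \<Rightarrow> real)" where
  "normalise N g = restrict (\<lambda>i. g i / (\<Sum>j<N. g j)) {..<N}"

lemma dirichlet_eq_distr_gamma_vector:
  "dirichlet N a = distr (gamma_vector N a) (PiM {..<N} (\<lambda>_. borel)) (normalise N)"
  unfolding dirichlet_def gamma_vector_def normalise_def[abs_def] by simp

lemma measurable_normalise [measurable]:
  "normalise N \<in> measurable (gamma_vector N a) (PiM {..<N} (\<lambda>_. borel))"
  unfolding normalise_def gamma_vector_def by measurable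

lemma prob_space_gamma_vector: "(\<And>i. 0 < a i) \<Longrightarrow> prob_space (gamma_vector N a)"
  unfolding gamma_vector_def by (intro prob_space_PiM prob_space_gamma_measure)

lemma AE_gamma_vector_pos:
  assumes "\<And>i. 0 < a i"
  shows "AE g in gamma_vector N a. \<forall>l\<in>{..<N}. g l > 0"
proof (rule AE_finite_allI)
  fix l assume "l \<in> {..<N}"
  then show "AE g in gamma_vector N a. g l > 0"
    unfolding gamma_vector_def
    using AE_PiM_component[of "{..<N}" "\<lambda>i. gamma_measure (a i)" l "\<lambda>x. 0 < x"]
      assms prob_space_gamma_measure AE_gamma_measure_pos
    by auto
qed simp

lemma nn_integral_gamma_vector_monomial_exp:
  fixes a :: "nat \<Rightarrow> real" and m :: "nat \<Rightarrow> nat" and t :: real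
  assumes a: "\<And>i. 0 < a i" and t: "t \<ge> 0"
  shows "(\<integral>\<^sup>+g. (\<Prod>l<N. ennreal (g l ^ m l * exp (- (t * g l)))) \<partial>gamma_vector N a)
    = ennreal ((\<Prod>l<N. Gamma (a l + real (m l)) / Gamma (a l)) / (1 + t) powr (\<Sum>l<N. a l + real (m l)))"
proof -
  interpret product_sigma_finite "\<lambda>i. gamma_measure (a i)"
    unfolding product_sigma_finite_def using prob_space_gamma_measure[OF a] prob_space_imp_sigma_finite by blast
  have "(\<integral>\<^sup>+g. (\<Prod>l<N. ennreal (g l ^ m l * exp (- (t * g l)))) \<partial>gamma_vector N a)
      = (\<Prod>l<N. (\<integral>\<^sup>+x. ennreal (x ^ m l * exp (- (t * x))) \<partial>gamma_measure (a l)))"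
    unfolding gamma_vector_def by (rule product_nn_integral_prod) auto
  also have "\<dots> = (\<Prod>l<N. ennreal (Gamma (a l + real (m l)) / (Gamma (a l) * (1 + t) powr (a l + real (m l)))))"
    using a t by (intro prod.cong refl nn_integral_gamma_measure_power_exp) auto
  also have "\<dots> = ennreal (\<Prod>l<N. Gamma (a l + real (m l)) / (Gamma (a l) * (1 + t) powr (a l + real (m l))))"
    using a t by (intro prod_ennreal) (auto intro!: divide_nonneg_pos add_pos_nonneg)
  also have "(\<Prod>l<N. Gamma (a l + real (m l)) / (Gamma (a l) * (1 + t) powr (a l + real (m l))))
      = (\<Prod>l<N. Gamma (a l + real (m l)) / Gamma (a l)) / (1 + t) powr (\<Sum>l<N. a l + real (m l))"
    using t by (simp add: powr_sum prod_dividef prod.distrib)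
  finally show ?thesis .
qed

lemma monomial_div_sum_power_eq_nn_integral:
  fixes g :: "nat \<Rightarrow> real" and m :: "nat \<Rightarrow> nat"
  assumes g: "\<forall>l\<in>{..<N}. g l > 0" and "N \<noteq> 0" and q: "q \<ge> 1"
  shows "ennreal ((\<Prod>l<N. g l ^ m l) / (\<Sum>l<N. g l) ^ q)
    = (\<integral>\<^sup>+t. ennreal (indicator {0<..} t * t powr (real q - 1) / Gamma (real q))
        * (\<Prod>l<N. ennreal (g l ^ m l * exp (- (t * g l)))) \<partial>lborel)"
proof -
  define S where "S = (\<Sum>l<N. g l)"
  have S_pos: "S > 0" unfolding S_def using g \<open>N \<noteq> 0\<close> by (intro sum_pos) auto
  have q_pos: "real q > 0" using q by simp
  have prod_nonneg: "(\<Prod>l<N. g l ^ m l) \<ge> 0" using g by (intro prod_nonneg zero_le_power) (auto intro: less_imp_le)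
  have "(\<Prod>l<N. ennreal (g l ^ m l * exp (- (t * g l)))) = ennreal ((\<Prod>l<N. g l ^ m l) * exp (- (S * t)))"
    for t
  proof -
    have "(\<Prod>l<N. ennreal (g l ^ m l * exp (- (t * g l)))) = ennreal (\<Prod>l<N. g l ^ m l * exp (- (t * g l)))"
      using g by (intro prod_ennreal) (auto intro!: mult_nonneg_nonneg zero_le_power less_imp_le)
    also have "(\<Prod>l<N. g l ^ m l * exp (- (t * g l))) = (\<Prod>l<N. g l ^ m l) * exp (- (S * t))"
      by (simp add: prod.distrib exp_sum[symmetric] S_def sum_negf sum_distrib_left mult.commute)
    finally show ?thesis .
  qed
  then have "(\<integral>\<^sup>+t. ennreal (indicator {0<..} t * t powr (real q - 1) / Gamma (real q))
        * (\<Prod>l<N. ennreal (g l ^ m l * exp (- (t * g l)))) \<partial>lborel)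
      = (\<integral>\<^sup>+t. ennreal ((\<Prod>l<N. g l ^ m l) / Gamma (real q))
        * ennreal (indicator {0<..} t * t powr (real q - 1) * exp (- (S * t))) \<partial>lborel)"
    using prod_nonneg q_pos
    by (intro nn_integral_cong) (simp add: indicator_def ennreal_mult'[symmetric] field_simps)
  also have "\<dots> = ennreal ((\<Prod>l<N. g l ^ m l) / Gamma (real q)) * ennreal (Gamma (real q) / S powr real q)"
    using S_pos q_pos by (subst nn_integral_cmult) (auto simp: nn_integral_powr_exp_eq_Gamma)
  finally show ?thesis
    using S_pos q_pos prod_nonneg by (simp add: ennreal_mult'[symmetric] powr_realpow S_def)
qed

text \<open>The moments of the normalised Gamma vector follow from
  \<open>S\<^bsup>-q\<^esup> = \<Gamma>(q)\<^sup>-\<^sup>1 \<integral>\<^sub>0\<^sup>\<infinity> t\<^bsup>q-1\<^esup> e\<^bsup>-tS\<^esup> dt\<close> for \<open>S = \<Sum>\<^sub>l g\<^sub>l\<close>: after exchanging the integrals, the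
  coordinates decouple and the remaining integral in \<open>t\<close> is a beta integral.\<close>

lemma nn_integral_gamma_vector_normalised_monomial:
  fixes a :: "nat \<Rightarrow> real" and m :: "nat \<Rightarrow> nat" and N q :: nat
  assumes a: "\<And>i. 0 < a i" and q: "q = (\<Sum>l<N. m l)" "q \<ge> 1"
  shows "(\<integral>\<^sup>+g. ennreal ((\<Prod>l<N. g l ^ m l) / (\<Sum>l<N. g l) ^ q) \<partial>gamma_vector N a)
       = ennreal ((\<Prod>l<N. Gamma (a l + real (m l)) / Gamma (a l)) * Gamma (\<Sum>l<N. a l)
           / Gamma ((\<Sum>l<N. a l) + real q))"
proof -
  interpret G: prob_space "gamma_vector N a" by (rule prob_space_gamma_vector[OF a])
  define A where "A = (\<Sum>l<N. a l)"
  define C where "C = (\<Prod>l<N. Gamma (a l + real (m l)) / Gamma (a l))"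
  have "N \<noteq> 0" using q by (cases N) auto
  then have A_pos: "A > 0" unfolding A_def using a by (intro sum_pos) auto
  have C_pos: "C > 0"
    unfolding C_def using a by (intro prod_pos) (auto intro!: divide_pos_pos Gamma_real_pos add_pos_nonneg)
  have q_pos: "real q > 0" using q(2) by simp
  define H where "H = (\<lambda>t (g::nat \<Rightarrow> real). ennreal (indicator {0<..} t * t powr (real q - 1) / Gamma (real q))
    * (\<Prod>l<N. ennreal (g l ^ m l * exp (- (t * g l)))))"
  have H_measurable: "(\<lambda>(t, g). H t g) \<in> borel_measurable (lborel \<Otimes>\<^sub>M gamma_vector N a)"
    unfolding H_def gamma_vector_def by measurable
  have integral_t: "ennreal ((\<Prod>l<N. g l ^ m l) / (\<Sum>l<N. g l) ^ q) = (\<integral>\<^sup>+t. H t g \<partial>lborel)"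
    if "\<forall>l\<in>{..<N}. g l > 0" for g
    unfolding H_def using that \<open>N \<noteq> 0\<close> q(2) by (rule monomial_div_sum_power_eq_nn_integral)
  have integral_g: "(\<integral>\<^sup>+g. H t g \<partial>gamma_vector N a)
      = ennreal (C / Gamma (real q)) * ennreal (indicator {0<..} t * t powr (real q - 1) / (1 + t) powr (A + real q))"
    for t
  proof (cases "t > 0")
    case True
    have "(\<integral>\<^sup>+g. H t g \<partial>gamma_vector N a) = ennreal (t powr (real q - 1) / Gamma (real q))
        * (\<integral>\<^sup>+g. (\<Prod>l<N. ennreal (g l ^ m l * exp (- (t * g l)))) \<partial>gamma_vector N a)"
      unfolding H_def using True by (subst nn_integral_cmult) (auto simp: gamma_vector_def)
    also have "\<dots> = ennreal (t powr (real q - 1) / Gamma (real q)) * ennreal (C / (1 + t) powr (A + real q))"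
      using True by (simp add: nn_integral_gamma_vector_monomial_exp[OF a] C_def A_def q(1) sum.distrib)
    finally show ?thesis
      using True C_pos q_pos by (simp add: ennreal_mult'[symmetric])
  qed (simp add: H_def)
  have "(\<integral>\<^sup>+g. ennreal ((\<Prod>l<N. g l ^ m l) / (\<Sum>l<N. g l) ^ q) \<partial>gamma_vector N a)
      = (\<integral>\<^sup>+g. (\<integral>\<^sup>+t. H t g \<partial>lborel) \<partial>gamma_vector N a)"
    using AE_gamma_vector_pos[of a N, OF a] by (intro nn_integral_cong_AE) (auto simp: integral_t)
  also have "\<dots> = (\<integral>\<^sup>+t. (\<integral>\<^sup>+g. H t g \<partial>gamma_vector N a) \<partial>lborel)"
    using pair_sigma_finite.Fubini'[OF _ H_measurable]
    by (simp add: lborel.sigma_finite_measure_axioms pair_sigma_finite.intro G.sigma_finite_measure_axioms)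
  also have "\<dots> = ennreal (C / Gamma (real q)) * ennreal (Gamma (real q) * Gamma A / Gamma (A + real q))"
    using A_pos q_pos by (simp add: integral_g nn_integral_cmult nn_integral_beta_prime)
  finally show ?thesis
    using A_pos q_pos C_pos by (simp add: ennreal_mult'[symmetric] C_def A_def)
qed

lemma prob_space_dirichlet: "(\<And>i. 0 < a i) \<Longrightarrow> prob_space (dirichlet N a)"
  unfolding dirichlet_eq_distr_gamma_vector
  by (rule prob_space.prob_space_distr[OF prob_space_gamma_vector]) simp_all

lemma sets_dirichlet: "sets (dirichlet N a) = sets (PiM {..<N} (\<lambda>_. (borel :: real measure)))"
  by (simp add: dirichlet_def)

lemma AE_dirichlet_simplex:
  assumes a: "\<And>i. 0 < a i" and N: "N > 0"
  shows "AE w in dirichlet N a. (\<forall>l<N. 0 \<le> w l) \<and> (\<Sum>l<N. w l) = 1"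
proof -
  have "AE g in gamma_vector N a. (\<forall>l<N. 0 \<le> normalise N g l) \<and> (\<Sum>l<N. normalise N g l) = 1"
    using AE_gamma_vector_pos[of a N, OF a]
  proof eventually_elim
    case (elim g)
    then have "(\<Sum>j<N. g j) > 0" using N by (intro sum_pos) auto
    with elim show ?case
      by (auto simp: normalise_def sum_divide_distrib[symmetric] intro!: divide_nonneg_pos less_imp_le)
  qed
  then show ?thesis
    unfolding dirichlet_eq_distr_gamma_vector by (subst AE_distr_iff) auto
qed

lemma dirichlet_monomial_moment:
  fixes a :: "nat \<Rightarrow> real" and m :: "nat \<Rightarrow> nat" and N q :: nat
  assumes a: "\<And>i. 0 < a i" and q: "q = (\<Sum>l<N. m l)" "q \<ge> 1"
  shows "(\<integral>w. (\<Prod>l<N. w l ^ m l) \<partial>dirichlet N a)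
       = (\<Prod>l<N. Gamma (a l + real (m l)) / Gamma (a l)) * Gamma (\<Sum>l<N. a l) / Gamma ((\<Sum>l<N. a l) + real q)"
proof -
  have "N > 0" using q by (cases N) auto
  have "(\<integral>w. (\<Prod>l<N. w l ^ m l) \<partial>dirichlet N a) = (\<integral>g. (\<Prod>l<N. normalise N g l ^ m l) \<partial>gamma_vector N a)"
    unfolding dirichlet_eq_distr_gamma_vector by (subst integral_distr) auto
  also have "\<dots> = (\<integral>g. (\<Prod>l<N. g l ^ m l) / (\<Sum>l<N. g l) ^ q \<partial>gamma_vector N a)"
    by (intro Bochner_Integration.integral_cong refl)
      (simp add: normalise_def power_divide prod_dividef q(1) power_sum)
  also have "\<dots> = enn2real (\<integral>\<^sup>+g. ennreal ((\<Prod>l<N. g l ^ m l) / (\<Sum>l<N. g l) ^ q) \<partial>gamma_vector N a)"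
  proof (rule integral_eq_nn_integral)
    show "(\<lambda>g. (\<Prod>l<N. g l ^ m l) / (\<Sum>l<N. g l) ^ q) \<in> borel_measurable (gamma_vector N a)"
      unfolding gamma_vector_def by measurable
    show "AE g in gamma_vector N a. 0 \<le> (\<Prod>l<N. g l ^ m l) / (\<Sum>l<N. g l) ^ q"
      using AE_gamma_vector_pos[of a N, OF a]
    proof eventually_elim
      case (elim g)
      then have "\<And>l. l < N \<Longrightarrow> 0 \<le> g l" by (simp add: less_imp_le)
      then show ?case by (auto intro!: divide_nonneg_nonneg prod_nonneg sum_nonneg zero_le_power)
    qed
  qed
  also have "\<dots> = (\<Prod>l<N. Gamma (a l + real (m l)) / Gamma (a l)) * Gamma (\<Sum>l<N. a l)
      / Gamma ((\<Sum>l<N. a l) + real q)"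
  proof -
    have "(\<Sum>l<N. a l) > 0" using \<open>N > 0\<close> a by (intro sum_pos) auto
    moreover have "(\<Prod>l<N. Gamma (a l + real (m l)) / Gamma (a l)) > 0"
      using a by (intro prod_pos) (auto intro!: divide_pos_pos Gamma_real_pos add_pos_nonneg)
    ultimately show ?thesis
      by (simp add: nn_integral_gamma_vector_normalised_monomial[OF a q] Gamma_real_pos)
  qed
  finally show ?thesis .
qed

lemma prod_power_if_eq:
  assumes "i < (N::nat)"
  shows "(\<Prod>l<N. (w l :: real) ^ (if l = i then k else 0)) = w i ^ k"
proof -
  have "(\<Prod>l<N. w l ^ (if l = i then k else 0)) = (\<Prod>l<N. if l = i then w l ^ k else 1)"
    by (intro prod.cong) auto
  also have "\<dots> = w i ^ k" using assms by (subst prod.delta) auto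
  finally show ?thesis .
qed

lemma dirichlet_mean:
  assumes a: "\<And>i. 0 < a i" and i: "i < N"
  shows "(\<integral>w. w i \<partial>dirichlet N a) = a i / (\<Sum>l<N. a l)"
proof -
  define m where "m = (\<lambda>l. if l = i then 1 else (0::nat))"
  have "(\<Sum>l<N. a l) > 0" using i a by (intro sum_pos) auto
  have "(\<integral>w. w i \<partial>dirichlet N a) = (\<integral>w. (\<Prod>l<N. w l ^ m l) \<partial>dirichlet N a)"
    using prod_power_if_eq[OF i, of _ 1] by (simp add: m_def)
  also have "\<dots> = (\<Prod>l<N. Gamma (a l + real (m l)) / Gamma (a l)) * Gamma (\<Sum>l<N. a l) / Gamma ((\<Sum>l<N. a l) + 1)"
    using i by (subst dirichlet_monomial_moment[OF a]) (auto simp: m_def)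
  also have "(\<Prod>l<N. Gamma (a l + real (m l)) / Gamma (a l)) = (\<Prod>l<N. if l = i then a i else 1)"
    using a by (intro prod.cong refl) (auto simp: m_def Gamma_real_plus1)
  finally show ?thesis
    using i \<open>(\<Sum>l<N. a l) > 0\<close> by (simp add: Gamma_real_plus1)
qed

lemma dirichlet_second_moment:
  assumes a: "\<And>i. 0 < a i" and i: "i < N" and j: "j < N"
  shows "(\<integral>w. w i * w j \<partial>dirichlet N a)
    = a i * (a j + (if i = j then 1 else 0)) / ((\<Sum>l<N. a l) * ((\<Sum>l<N. a l) + 1))"
proof -
  define m where "m = (\<lambda>l. (if l = i then 1 else 0) + (if l = j then 1 else (0::nat)))"
  define A where "A = (\<Sum>l<N. a l)"
  have A: "A > 0" unfolding A_def using i a by (intro sum_pos) auto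
  have monomial: "(\<Prod>l<N. w l ^ m l) = w i * w j" for w :: "nat \<Rightarrow> real"
    unfolding m_def power_add prod.distrib using prod_power_if_eq[OF i, of w 1] prod_power_if_eq[OF j, of w 1]
    by simp
  have Gamma_ratio: "Gamma (a l + real (m l)) / Gamma (a l)
      = (if l = i then a l else 1) * (if l = j then a l + (if i = j then 1 else 0) else 1)" for l
    using a[of l] Gamma_real_plus1[of "a l"] Gamma_real_plus1[of "a l + 1"]
    by (auto simp: m_def add.assoc)
  have "(\<integral>w. w i * w j \<partial>dirichlet N a) = (\<integral>w. (\<Prod>l<N. w l ^ m l) \<partial>dirichlet N a)"
    by (simp add: monomial)
  also have "\<dots> = (\<Prod>l<N. Gamma (a l + real (m l)) / Gamma (a l)) * Gamma A / Gamma (A + 2)"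
    using i j unfolding A_def by (subst dirichlet_monomial_moment[OF a, where q = 2]) (auto simp: m_def sum.distrib)
  also have "(\<Prod>l<N. Gamma (a l + real (m l)) / Gamma (a l)) = a i * (a j + (if i = j then 1 else 0))"
    using i j by (simp add: Gamma_ratio prod.distrib)
  also have "Gamma (A + 2) = Gamma A * (A * (A + 1))"
    using Gamma_real_plus1[of "A + 1"] Gamma_real_plus1[of A] A by (simp add: add.assoc)
  finally show ?thesis
    using A by (simp add: A_def)
qed

section \<open>The Dirichlet weights of the approximate posterior\<close>

locale dirichlet_weights =
  fixes n T :: nat and \<alpha> :: real
  assumes n_pos: "n \<ge> 1" and T_pos: "T \<ge> 1" and \<alpha>_pos: "\<alpha> > 0"
begin

abbreviation "Dir \<equiv> dirichlet (n + T) (dir_params n T \<alpha>)"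

definition offdiag_moment :: real where
  "offdiag_moment = 1 / (real n)\<^sup>2 - 2 / (real n * (real n + \<alpha>)) + 1 / ((real n + \<alpha>) * (real n + \<alpha> + 1))"

definition diag_moment :: real where
  "diag_moment = 1 / (real n)\<^sup>2 - 2 / (real n * (real n + \<alpha>)) + 2 / ((real n + \<alpha>) * (real n + \<alpha> + 1))"

lemma dir_params_pos: "0 < dir_params n T \<alpha> l"
  using \<alpha>_pos T_pos by (simp add: dir_params_def)

lemma sum_dir_params: "(\<Sum>l<n + T. dir_params n T \<alpha> l) = real n + \<alpha>"
  using T_pos by (simp add: sum_lessThan_add dir_params_def)

lemma prob_space_Dir: "prob_space Dir"
  by (rule prob_space_dirichlet) (rule dir_params_pos)

lemma AE_Dir_simplex: "AE w in Dir. (\<forall>l<n + T. 0 \<le> w l) \<and> (\<Sum>l<n + T. w l) = 1"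
  using n_pos by (intro AE_dirichlet_simplex dir_params_pos) auto

lemma AE_Dir_unit_interval: "AE w in Dir. \<forall>l<n + T. 0 \<le> w l \<and> w l \<le> 1"
  using AE_Dir_simplex
proof eventually_elim
  case (elim w)
  have "\<And>l. l < n + T \<Longrightarrow> w l \<le> (\<Sum>l<n + T. w l)"
    using elim by (intro member_le_sum) auto
  then show ?case using elim by auto
qed

lemma measurable_Dir_component [measurable]: "i < n + T \<Longrightarrow> (\<lambda>w. w i) \<in> borel_measurable Dir"
  by (subst measurable_cong_sets[OF sets_dirichlet refl]) (rule measurable_component_singleton, simp)

lemma integrable_Dir_bounded:
  fixes f :: "(nat \<Rightarrow> real) \<Rightarrow> real"
  assumes "f \<in> borel_measurable Dir" "\<And>w. \<forall>l<n + T. 0 \<le> w l \<and> w l \<le> 1 \<Longrightarrow> \<bar>f w\<bar> \<le> B"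
  shows "integrable Dir f"
proof -
  interpret prob_space Dir by (rule prob_space_Dir)
  show ?thesis
    using AE_Dir_unit_interval assms by (intro integrable_const_bound[of _ B]) (auto elim!: eventually_mono)
qed

lemma integrable_Dir_component: "i < n + T \<Longrightarrow> integrable Dir (\<lambda>w. w i)"
  by (rule integrable_Dir_bounded[where B = 1]) auto

lemma abs_centred_weight_le_1:
  assumes "\<forall>l<n + T. 0 \<le> w l \<and> w l \<le> 1" "i < n"
  shows "\<bar>1 / real n - w i\<bar> \<le> 1"
proof -
  have "0 \<le> 1 / real n" "1 / real n \<le> 1" using n_pos by auto
  moreover have "0 \<le> w i" "w i \<le> 1" using assms by auto
  ultimately show ?thesis by linarith
qed

lemma integrable_Dir_centred_product:
  assumes "i < n" "j < n"
  shows "integrable Dir (\<lambda>w. (1 / real n - w i) * (1 / real n - w j))"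
proof (rule integrable_Dir_bounded[where B = 1])
  fix w :: "nat \<Rightarrow> real" assume "\<forall>l<n + T. 0 \<le> w l \<and> w l \<le> 1"
  then have "\<bar>1 / real n - w i\<bar> \<le> 1" "\<bar>1 / real n - w j\<bar> \<le> 1"
    using assms by (auto intro: abs_centred_weight_le_1)
  then show "\<bar>(1 / real n - w i) * (1 / real n - w j)\<bar> \<le> 1"
    by (simp add: abs_mult mult_le_one)
qed (use assms in auto)

lemma expectation_data_weight: "i < n \<Longrightarrow> (\<integral>w. w i \<partial>Dir) = 1 / (real n + \<alpha>)"
  using dirichlet_mean[of "dir_params n T \<alpha>" i "n + T", OF dir_params_pos]
  by (simp add: dir_params_def sum_dir_params[unfolded dir_params_def])

lemma expectation_data_weight_product:
  "i < n \<Longrightarrow> j < n \<Longrightarrow>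
    (\<integral>w. w i * w j \<partial>Dir) = (if i = j then 2 else 1) / ((real n + \<alpha>) * (real n + \<alpha> + 1))"
  using dirichlet_second_moment[of "dir_params n T \<alpha>" i "n + T" j, OF dir_params_pos]
  by (simp add: dir_params_def sum_dir_params[unfolded dir_params_def])

lemma expectation_centred_product:
  assumes i: "i < n" and j: "j < n"
  shows "(\<integral>w. (1 / real n - w i) * (1 / real n - w j) \<partial>Dir) = (if i = j then diag_moment else offdiag_moment)"
proof -
  interpret prob_space Dir by (rule prob_space_Dir)
  have "\<And>w. (1 / real n - w i) * (1 / real n - w j)
      = 1 / (real n)\<^sup>2 - (1 / real n) * w i - (1 / real n) * w j + w i * w j"
    by (simp add: algebra_simps power2_eq_square)
  moreover have "integrable Dir (\<lambda>w. w i * w j)"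
    using i j by (intro integrable_Dir_bounded[where B = 1]) (auto simp: abs_mult intro!: mult_le_one)
  ultimately have "(\<integral>w. (1 / real n - w i) * (1 / real n - w j) \<partial>Dir)
      = 1 / (real n)\<^sup>2 - (1 / real n) * (\<integral>w. w i \<partial>Dir) - (1 / real n) * (\<integral>w. w j \<partial>Dir) + (\<integral>w. w i * w j \<partial>Dir)"
    using integrable_Dir_component i j prob_space by simp
  then show ?thesis
    using i j by (simp add: expectation_data_weight expectation_data_weight_product diag_moment_def offdiag_moment_def)
qed

lemma sum_data_weights_le_1:
  fixes w :: "nat \<Rightarrow> real"
  assumes "\<forall>l<n + T. 0 \<le> w l" "(\<Sum>l<n + T. w l) = 1"
  shows "(\<Sum>i<n. w i) \<le> 1"
proof -
  have "0 \<le> (\<Sum>l<T. w (n + l))" using assms(1) by (intro sum_nonneg) auto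
  then show ?thesis using assms(2) by (simp add: sum_lessThan_add)
qed

lemma post_law_fst:
  assumes "prob_space F"
  shows "fst \<in> measurable (post_law n T \<alpha> F) Dir" "distr (post_law n T \<alpha> F) Dir fst = Dir"
proof -
  interpret FT: prob_space "PiM {..<T} (\<lambda>_. F)" using assms by (intro prob_space_PiM) auto
  show "fst \<in> measurable (post_law n T \<alpha> F) Dir" "distr (post_law n T \<alpha> F) Dir fst = Dir"
    unfolding post_law_def by (simp_all add: FT.distr_pair_fst)
qed

lemma AE_post_law_simplex:
  assumes "prob_space F"
  shows "AE p in post_law n T \<alpha> F. (\<forall>l<n + T. 0 \<le> fst p l) \<and> (\<Sum>l<n + T. fst p l) = 1"
proof -
  have "AE w in distr (post_law n T \<alpha> F) Dir fst. (\<forall>l<n + T. 0 \<le> w l) \<and> (\<Sum>l<n + T. w l) = 1"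
    unfolding post_law_fst[OF assms] by (rule AE_Dir_simplex)
  then show ?thesis by (rule AE_distrD[OF post_law_fst(1)[OF assms]])
qed

lemma integral_post_law_fst:
  fixes h :: "(nat \<Rightarrow> real) \<Rightarrow> real"
  assumes F: "prob_space F" and h: "integrable Dir h"
  shows "integrable (post_law n T \<alpha> F) (\<lambda>p. h (fst p))"
    and "(\<integral>p. h (fst p) \<partial>post_law n T \<alpha> F) = (\<integral>w. h w \<partial>Dir)"
proof -
  have h_measurable: "h \<in> borel_measurable Dir" using h by auto
  show "integrable (post_law n T \<alpha> F) (\<lambda>p. h (fst p))"
    using integrable_distr_eq[OF post_law_fst(1)[OF F] h_measurable] h by (simp add: post_law_fst(2)[OF F])
  show "(\<integral>p. h (fst p) \<partial>post_law n T \<alpha> F) = (\<integral>w. h w \<partial>Dir)"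
    using integral_distr[OF post_law_fst(1)[OF F] h_measurable] by (simp add: post_law_fst(2)[OF F])
qed

lemma diag_moment_nonneg: "0 \<le> diag_moment"
proof -
  interpret prob_space Dir by (rule prob_space_Dir)
  have "0 \<le> (\<integral>w. (1 / real n - w 0) * (1 / real n - w 0) \<partial>Dir)"
    by (intro Bochner_Integration.integral_nonneg) simp
  then show ?thesis using expectation_centred_product[of 0 0] n_pos by simp
qed

text \<open>With \<open>s = \<alpha>(\<alpha>+1)\<close> and \<open>Z = n\<^sup>2(n+\<alpha>)(n+\<alpha>+1)\<close> one has \<open>Z \<cdot> offdiag_moment = s - n\<close> and
  \<open>Z \<cdot> diag_moment = s - n + n\<^sup>2\<close>; the bound is then \<open>|s - n| \<le> s + n\<close>.\<close>

lemma centred_moment_sum_le: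
  "real n * diag_moment + real n * (real n - 1) * \<bar>offdiag_moment\<bar>
    \<le> (2 * (real n - 1) + \<alpha> * (\<alpha> + 1)) / ((\<alpha> + real n) * (real n + \<alpha> + 1))"
proof -
  define A where "A = real n + \<alpha>"
  define B where "B = A * (A + 1)"
  define s where "s = \<alpha> * (\<alpha> + 1)"
  define Z where "Z = (real n)\<^sup>2 * B"
  have n: "real n \<ge> 1" using n_pos by simp
  have A: "A > 0" using n \<alpha>_pos by (simp add: A_def)
  have B: "B > 0" using A by (simp add: B_def)
  have Z: "Z > 0" unfolding Z_def using n B by simp
  have Z_n2: "1 / (real n)\<^sup>2 * Z = B" and Z_nA: "2 / (real n * A) * Z = 2 * real n * (A + 1)"
    unfolding Z_def B_def using n A by (simp_all add: power2_eq_square field_simps)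
  have Z_B: "c / B * Z = c * (real n)\<^sup>2" for c
    unfolding Z_def using B by (simp add: mult.assoc[symmetric])
  have "offdiag_moment * Z = B - 2 * real n * (A + 1) + (real n)\<^sup>2"
    unfolding offdiag_moment_def A_def[symmetric] B_def[symmetric] using Z_n2 Z_nA Z_B[of 1]
    by (simp add: algebra_simps)
  also have "\<dots> = s - real n" unfolding s_def B_def A_def by (simp add: algebra_simps power2_eq_square)
  finally have offdiag: "offdiag_moment = (s - real n) / Z" using Z by (simp add: field_simps)
  have "diag_moment * Z = B - 2 * real n * (A + 1) + 2 * (real n)\<^sup>2"
    unfolding diag_moment_def A_def[symmetric] B_def[symmetric] using Z_n2 Z_nA Z_B[of 2]
    by (simp add: algebra_simps)
  also have "\<dots> = s - real n + (real n)\<^sup>2" unfolding s_def B_def A_def by (simp add: algebra_simps power2_eq_square)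
  finally have diag: "diag_moment = (s - real n + (real n)\<^sup>2) / Z" using Z by (simp add: field_simps)
  have "\<bar>s - real n\<bar> \<le> s + real n" using \<alpha>_pos n by (simp add: s_def abs_le_iff)
  then have "real n * (real n - 1) * \<bar>offdiag_moment\<bar> \<le> real n * (real n - 1) * ((s + real n) / Z)"
    using Z n by (simp add: offdiag abs_divide divide_right_mono mult_left_mono)
  moreover have "real n * ((s - real n + (real n)\<^sup>2) / Z) + real n * (real n - 1) * ((s + real n) / Z)
      = (real n)\<^sup>2 * (2 * (real n - 1) + s) / Z"
    by (simp add: add_divide_distrib[symmetric] algebra_simps power2_eq_square)
  moreover have "(real n)\<^sup>2 * (2 * (real n - 1) + s) / Z = (2 * (real n - 1) + s) / B"
    using n by (simp add: Z_def)
  moreover have "(\<alpha> + real n) * (real n + \<alpha> + 1) = B"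
    by (simp add: B_def A_def algebra_simps)
  ultimately show ?thesis by (simp add: diag s_def)
qed

lemma expectation_tail_mass: "(\<integral>w. 1 - (\<Sum>i<n. w i) \<partial>Dir) = \<alpha> / (real n + \<alpha>)"
proof -
  interpret prob_space Dir by (rule prob_space_Dir)
  have "(\<integral>w. 1 - (\<Sum>i<n. w i) \<partial>Dir) = 1 - (\<Sum>i<n. (\<integral>w. w i \<partial>Dir))"
    using integrable_Dir_component prob_space
    by (subst Bochner_Integration.integral_diff)
      (auto intro!: Bochner_Integration.integrable_sum simp: Bochner_Integration.integral_sum)
  also have "\<dots> = \<alpha> / (real n + \<alpha>)"
    using \<alpha>_pos by (simp add: expectation_data_weight, simp add: field_simps)
  finally show ?thesis .
qed

end

lemma tail_mass_le_sqrt: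
  fixes n \<alpha> :: real
  assumes n: "n \<ge> 1" and \<alpha>: "\<alpha> > 0"
  shows "\<alpha> / (n + \<alpha>) \<le> sqrt (\<alpha> * (1 + \<alpha>) / ((\<alpha> + n) * (\<alpha> + n + 1)))"
proof (rule real_le_rsqrt)
  have "\<alpha> * (\<alpha> + n + 1) \<le> (1 + \<alpha>) * (n + \<alpha>)" using n by (simp add: algebra_simps)
  then have "\<alpha> * \<alpha> * ((\<alpha> + n) * (\<alpha> + n + 1)) \<le> \<alpha> * (1 + \<alpha>) * ((n + \<alpha>) * (n + \<alpha>))"
    using mult_left_mono[of _ _ "\<alpha> * (\<alpha> + n)"] n \<alpha> by (simp add: algebra_simps)
  then show "(\<alpha> / (n + \<alpha>))\<^sup>2 \<le> \<alpha> * (1 + \<alpha>) / ((\<alpha> + n) * (\<alpha> + n + 1))"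
    using n \<alpha> by (simp add: power2_eq_square divide_simps)
qed

definition centred_gram :: "('a \<Rightarrow> 'a \<Rightarrow> real) \<Rightarrow> nat \<Rightarrow> (nat \<Rightarrow> 'a) \<Rightarrow> (nat \<Rightarrow> real) \<Rightarrow> real" where
  "centred_gram k n xs w = quad_form n (\<lambda>i j. k (xs i) (xs j)) (\<lambda>i. 1 / real n - w i)"

lemma (in prob_space) expectation_sqrt_le:
  fixes f :: "'a \<Rightarrow> real"
  assumes f: "integrable M f" and sqrt_f: "integrable M (\<lambda>x. sqrt (f x))" and nonneg: "AE x in M. 0 \<le> f x"
  shows "(\<integral>x. sqrt (f x) \<partial>M) \<le> sqrt (\<integral>x. f x \<partial>M)"
proof -
  have [measurable]: "f \<in> borel_measurable M" using f by auto
  have sq: "AE x in M. (sqrt (f x))\<^sup>2 = f x" using nonneg by eventually_elim simp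
  have "integrable M (\<lambda>x. (sqrt (f x))\<^sup>2)"
    using f by (rule integrable_cong_AE_imp) (use sq in \<open>auto elim: AE_mp\<close>)
  then have "0 \<le> expectation (\<lambda>x. (sqrt (f x))\<^sup>2) - (expectation (\<lambda>x. sqrt (f x)))\<^sup>2"
    using variance_eq[OF sqrt_f] Bochner_Integration.integral_nonneg[of M "\<lambda>x. (sqrt (f x) - expectation (\<lambda>x. sqrt (f x)))\<^sup>2"]
    by simp
  also have "expectation (\<lambda>x. (sqrt (f x))\<^sup>2) = expectation f"
    by (rule integral_cong_AE) (use sq f in auto)
  finally show ?thesis by (intro real_le_rsqrt) simp
qed

locale kernel_dirichlet = bounded_kernel + dirichlet_weights
begin

lemma centred_gram_nonneg: "\<forall>i<n. xs i \<in> space M \<Longrightarrow> 0 \<le> centred_gram k n xs w"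
  unfolding centred_gram_def quad_form_def by (rule kernel_gram_nonneg) auto

lemma integrable_centred_gram: "integrable Dir (centred_gram k n xs)"
  unfolding centred_gram_def quad_form_def
  by (intro Bochner_Integration.integrable_sum integrable_mult_left integrable_Dir_centred_product) auto

lemma expectation_centred_gram_le:
  assumes xs: "\<forall>i<n. xs i \<in> space M"
  shows "(\<integral>w. centred_gram k n xs w \<partial>Dir)
    \<le> (2 * (real n - 1) + \<alpha> * (\<alpha> + 1)) / ((\<alpha> + real n) * (real n + \<alpha> + 1))"
proof -
  define e where "e = (\<lambda>i j::nat. if i = j then diag_moment else offdiag_moment)"
  have "(\<integral>w. centred_gram k n xs w \<partial>Dir)
      = (\<Sum>i<n. \<Sum>j<n. (\<integral>w. (1 / real n - w i) * (1 / real n - w j) \<partial>Dir) * k (xs i) (xs j))"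
    unfolding centred_gram_def quad_form_def
    by (subst integral_sum_sum) (auto intro!: integrable_mult_left integrable_Dir_centred_product)
  also have "\<dots> = (\<Sum>i<n. \<Sum>j<n. e i j * k (xs i) (xs j))"
    by (simp add: expectation_centred_product e_def)
  also have "\<dots> \<le> (\<Sum>i<n. \<Sum>j<n. \<bar>e i j\<bar>)"
  proof (intro sum_mono)
    fix i j assume "i \<in> {..<n}" "j \<in> {..<n}"
    then have "\<bar>e i j * k (xs i) (xs j)\<bar> \<le> \<bar>e i j\<bar>"
      using kernel_bounded xs by (simp add: abs_mult mult_left_le)
    then show "e i j * k (xs i) (xs j) \<le> \<bar>e i j\<bar>" by linarith
  qed
  also have "\<dots> = (\<Sum>i<n. diag_moment + (real n - 1) * \<bar>offdiag_moment\<bar>)"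
  proof (intro sum.cong refl)
    fix i assume "i \<in> {..<n}"
    then have "(\<Sum>j<n. \<bar>e i j\<bar>) = (\<Sum>j<n. \<bar>offdiag_moment\<bar> + (if i = j then diag_moment - \<bar>offdiag_moment\<bar> else 0))"
      using diag_moment_nonneg by (intro sum.cong refl) (auto simp: e_def)
    also have "\<dots> = diag_moment + (real n - 1) * \<bar>offdiag_moment\<bar>"
      using \<open>i \<in> {..<n}\<close> by (simp add: sum.distrib algebra_simps)
    finally show "(\<Sum>j<n. \<bar>e i j\<bar>) = diag_moment + (real n - 1) * \<bar>offdiag_moment\<bar>" .
  qed
  also have "\<dots> \<le> (2 * (real n - 1) + \<alpha> * (\<alpha> + 1)) / ((\<alpha> + real n) * (real n + \<alpha> + 1))"
    using centred_moment_sum_le by (simp add: algebra_simps)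
  finally show ?thesis .
qed

lemma integrable_sqrt_centred_gram:
  assumes xs: "\<forall>i<n. xs i \<in> space M"
  shows "integrable Dir (\<lambda>w. sqrt (centred_gram k n xs w))"
proof (rule integrable_Dir_bounded[where B = "real n"])
  show "(\<lambda>w. sqrt (centred_gram k n xs w)) \<in> borel_measurable Dir"
    unfolding centred_gram_def quad_form_def by measurable
  fix w :: "nat \<Rightarrow> real" assume w: "\<forall>l<n + T. 0 \<le> w l \<and> w l \<le> 1"
  have "sqrt (centred_gram k n xs w) \<le> (\<Sum>i<n. \<bar>1 / real n - w i\<bar>)"
    unfolding centred_gram_def using xs kernel_bounded by (intro sqrt_quad_form_le_sum_abs) auto
  also have "\<dots> \<le> (\<Sum>i<n. 1)"
    using w by (intro sum_mono abs_centred_weight_le_1) auto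
  finally show "\<bar>sqrt (centred_gram k n xs w)\<bar> \<le> real n"
    using centred_gram_nonneg[OF xs] by simp
qed

lemma expectation_sqrt_centred_gram_le:
  assumes xs: "\<forall>i<n. xs i \<in> space M"
  shows "(\<integral>w. sqrt (centred_gram k n xs w) \<partial>Dir)
    \<le> sqrt ((2 * (real n - 1) + \<alpha> * (\<alpha> + 1)) / ((\<alpha> + real n) * (real n + \<alpha> + 1)))"
proof -
  interpret prob_space Dir by (rule prob_space_Dir)
  have "(\<integral>w. sqrt (centred_gram k n xs w) \<partial>Dir) \<le> sqrt (\<integral>w. centred_gram k n xs w \<partial>Dir)"
    using centred_gram_nonneg[OF xs] integrable_centred_gram integrable_sqrt_centred_gram[OF xs]
    by (intro expectation_sqrt_le) auto
  also have "\<dots> \<le> sqrt ((2 * (real n - 1) + \<alpha> * (\<alpha> + 1)) / ((\<alpha> + real n) * (real n + \<alpha> + 1)))"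
    by (rule real_sqrt_le_mono[OF expectation_centred_gram_le[OF xs]])
  finally show ?thesis .
qed

end

section \<open>The empirical measure\<close>

lemma measurable_PiM_component_sets:
  assumes "sets P = sets M" "i \<in> I"
  shows "(\<lambda>\<omega>. \<omega> i) \<in> measurable (PiM I (\<lambda>_. P)) M"
  using assms by (subst measurable_cong_sets[OF refl assms(1)[symmetric]]) (rule measurable_component_singleton)

lemma PiM_lessThan_space:
  assumes "sets P = sets M" "\<omega> \<in> space (PiM {..<n} (\<lambda>_. P))"
  shows "\<forall>i<n. \<omega> i \<in> space M"
  using assms sets_eq_imp_space_eq[OF assms(1)] by (auto simp: space_PiM PiE_iff)

context bounded_kernel
begin

definition empirical_mmd2 :: "'a measure \<Rightarrow> nat \<Rightarrow> (nat \<Rightarrow> 'a) \<Rightarrow> real" where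
  "empirical_mmd2 P n xs = mean_embedding_inner k P P - 2 * (\<Sum>i<n. (\<integral>y. k (xs i) y \<partial>P) / real n)
     + (\<Sum>i<n. \<Sum>j<n. k (xs i) (xs j) / (real n)\<^sup>2)"

lemma prob_space_wpm_uniform:
  assumes "n \<ge> 1" "\<forall>i<n. xs i \<in> space M"
  shows "prob_space (wpm M n xs (\<lambda>_. 1 / real n))" "sets (wpm M n xs (\<lambda>_. 1 / real n)) = sets M"
  using assms by (simp_all add: prob_space_wpm sets_wpm)

lemma mmd2_wpm_uniform:
  assumes P: "prob_space P" "sets P = sets M" and n: "n \<ge> 1" and xs: "\<forall>i<n. xs i \<in> space M"
  shows "mmd2 k P (wpm M n xs (\<lambda>_. 1 / real n)) = empirical_mmd2 P n xs"
  using mean_embedding_inner_commute[OF P prob_space_wpm_uniform[OF n xs]]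
    mean_embedding_inner_wpm[OF xs _ P] mean_embedding_inner_wpm_wpm[OF xs]
  by (simp add: mmd2_eq_mean_embedding_inner empirical_mmd2_def power2_eq_square)

lemma integral_empirical_mmd2:
  assumes P: "prob_space P" "sets P = sets M" and n: "n \<ge> 1"
  shows "(\<integral>xs. empirical_mmd2 P n xs \<partial>PiM {..<n} (\<lambda>_. P))
    = ((\<integral>x. k x x \<partial>P) - mean_embedding_inner k P P) / real n"
proof -
  let ?X = "PiM {..<n} (\<lambda>_. P)"
  interpret X: prob_space ?X using P by (intro prob_space_PiM) auto
  define K where "K = mean_embedding_inner k P P"
  define D where "D = (\<integral>x. k x x \<partial>P)"
  have component: "(\<lambda>\<omega>. \<omega> i) \<in> measurable ?X M" if "i < n" for i
    using that by (intro measurable_PiM_component_sets[OF P(2)]) auto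
  have space: "\<omega> i \<in> space M" if "\<omega> \<in> space ?X" "i < n" for \<omega> i
    using PiM_lessThan_space[OF P(2) that(1)] that(2) by auto
  have integrable_inner: "integrable ?X (\<lambda>\<omega>. (\<integral>y. k (\<omega> i) y \<partial>P) / real n)" if "i < n" for i
    using that space abs_kernel_integral_le_1[OF P] measurable_comp[OF component measurable_kernel_integral[OF P]]
    by (intro integrable_divide X.integrable_const_bound[of _ 1]) (auto simp: comp_def)
  have integrable_kernel: "integrable ?X (\<lambda>\<omega>. k (\<omega> i) (\<omega> j) / (real n)\<^sup>2)" if "i < n" "j < n" for i j
    using that space kernel_bounded component
    by (intro integrable_divide X.integrable_const_bound[of _ 1]) (auto intro!: measurable_kernel)
  have "(\<lambda>x. \<integral>y. k x y \<partial>P) \<in> borel_measurable P"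
    using measurable_kernel_integral[OF P] by (simp add: measurable_cong_sets[OF P(2) refl])
  then have inner_integral: "(\<integral>\<omega>. (\<integral>y. k (\<omega> i) y \<partial>P) \<partial>?X) = K" if "i < n" for i
    using integral_PiM_component[where Mi = "\<lambda>_. P" and I = "{..<n}"] P that
    by (simp add: K_def mean_embedding_inner_def)
  have "(\<integral>xs. (\<Sum>i<n. (\<integral>y. k (xs i) y \<partial>P) / real n) \<partial>?X) = (\<Sum>i<n. K / real n)"
    using integrable_inner by (simp add: Bochner_Integration.integral_sum inner_integral)
  also have "\<dots> = K" using n by simp
  finally have first_order: "(\<integral>xs. (\<Sum>i<n. (\<integral>y. k (xs i) y \<partial>P) / real n) \<partial>?X) = K" .
  have "(\<integral>xs. (\<Sum>i<n. \<Sum>j<n. k (xs i) (xs j)) \<partial>?X) = real n * real n * K + real n * (D - K)"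
    using integral_gram_PiM_mod[where P = "\<lambda>_. P" and c = "\<lambda>_. 1" and m = 1 and N = n] P
    by (simp add: K_def D_def)
  then have "(\<integral>xs. (\<Sum>i<n. \<Sum>j<n. k (xs i) (xs j) / (real n)\<^sup>2) \<partial>?X)
      = (real n * real n * K + real n * (D - K)) / (real n)\<^sup>2"
    by (simp add: sum_divide_distrib[symmetric])
  also have "\<dots> = K + (D - K) / real n"
    using n by (simp add: power2_eq_square add_divide_distrib)
  finally have second_order: "(\<integral>xs. (\<Sum>i<n. \<Sum>j<n. k (xs i) (xs j) / (real n)\<^sup>2) \<partial>?X)
      = K + (D - K) / real n" .
  have "integrable ?X (\<lambda>xs. \<Sum>i<n. (\<integral>y. k (xs i) y \<partial>P) / real n)"
    "integrable ?X (\<lambda>xs. \<Sum>i<n. \<Sum>j<n. k (xs i) (xs j) / (real n)\<^sup>2)"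
    using integrable_inner integrable_kernel by (auto intro!: Bochner_Integration.integrable_sum)
  then have "(\<integral>xs. empirical_mmd2 P n xs \<partial>?X)
      = K - 2 * (\<integral>xs. (\<Sum>i<n. (\<integral>y. k (xs i) y \<partial>P) / real n) \<partial>?X)
        + (\<integral>xs. (\<Sum>i<n. \<Sum>j<n. k (xs i) (xs j) / (real n)\<^sup>2) \<partial>?X)"
    unfolding empirical_mmd2_def using X.prob_space
    by (simp add: K_def Bochner_Integration.integral_add Bochner_Integration.integral_diff)
  then show ?thesis
    unfolding D_def[symmetric] K_def[symmetric] first_order second_order by simp
qed

lemma borel_measurable_empirical_mmd2:
  assumes P: "prob_space P" "sets P = sets M"
  shows "empirical_mmd2 P n \<in> borel_measurable (PiM {..<n} (\<lambda>_. P))"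
proof -
  have component: "(\<lambda>\<omega>. \<omega> i) \<in> measurable (PiM {..<n} (\<lambda>_. P)) M" if "i < n" for i
    using that by (intro measurable_PiM_component_sets[OF P(2)]) auto
  show ?thesis
    unfolding empirical_mmd2_def[abs_def]
    using measurable_comp[OF component measurable_kernel_integral[OF P]] component
    by (intro borel_measurable_add borel_measurable_diff borel_measurable_sum borel_measurable_times
        borel_measurable_divide measurable_const measurable_kernel) (auto simp: comp_def)
qed

lemma abs_empirical_mmd2_le:
  assumes P: "prob_space P" "sets P = sets M" and xs: "\<forall>i<n. xs i \<in> space M"
  shows "\<bar>empirical_mmd2 P n xs\<bar> \<le> 4"
proof -
  have "\<bar>\<Sum>i<n. (\<integral>y. k (xs i) y \<partial>P) / real n\<bar> \<le> (\<Sum>i<n. 1 / real n)"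
    using abs_kernel_integral_le_1[OF P] xs
    by (intro order.trans[OF sum_abs] sum_mono) (auto simp: abs_divide divide_right_mono)
  moreover have "\<bar>\<Sum>i<n. \<Sum>j<n. k (xs i) (xs j) / (real n)\<^sup>2\<bar> \<le> (\<Sum>i<n. \<Sum>j<n. 1 / (real n)\<^sup>2)"
    using kernel_bounded xs
    by (intro order.trans[OF sum_abs] sum_mono order.trans[OF sum_abs])
      (auto simp: abs_divide divide_right_mono)
  moreover have "(\<Sum>i<n. 1 / real n) \<le> 1" "(\<Sum>i<n. \<Sum>j<n. 1 / (real n)\<^sup>2) \<le> 1"
    by (cases "n = 0"; simp add: power2_eq_square)+
  ultimately show ?thesis
    using abs_mean_embedding_inner_le_1[OF P P] unfolding empirical_mmd2_def by linarith
qed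

lemma mmd_wpm_uniform_eq:
  assumes P: "prob_space P" "sets P = sets M" and n: "n \<ge> 1" and xs: "\<forall>i<n. xs i \<in> space M"
  shows "mmd k P (wpm M n xs (\<lambda>_. 1 / real n)) = sqrt (empirical_mmd2 P n xs)"
  by (simp add: mmd_def mmd2_wpm_uniform[OF P n xs])

lemma integrable_mmd_wpm_uniform:
  assumes P: "prob_space P" "sets P = sets M" and n: "n \<ge> 1"
  shows "integrable (PiM {..<n} (\<lambda>_. P)) (\<lambda>xs. mmd k P (wpm M n xs (\<lambda>_. 1 / real n)))"
proof -
  let ?X = "PiM {..<n} (\<lambda>_. P)"
  interpret X: prob_space ?X using P by (intro prob_space_PiM) auto
  have xs: "\<forall>i<n. xs i \<in> space M" if "xs \<in> space ?X" for xs
    using PiM_lessThan_space[OF P(2) that] .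
  have "(\<lambda>xs. mmd k P (wpm M n xs (\<lambda>_. 1 / real n))) \<in> borel_measurable ?X"
    using borel_measurable_empirical_mmd2[OF P]
    by (simp add: measurable_cong[OF mmd_wpm_uniform_eq[OF P n xs]])
  then show ?thesis
    using xs mmd_nonneg mmd_le_2 P prob_space_wpm_uniform[OF n]
    by (intro X.integrable_const_bound[of _ 2]) (auto intro!: AE_I2)
qed

lemma integral_mmd_wpm_uniform_le:
  assumes P: "prob_space P" "sets P = sets M" and n: "n \<ge> 1"
  shows "(\<integral>xs. mmd k P (wpm M n xs (\<lambda>_. 1 / real n)) \<partial>PiM {..<n} (\<lambda>_. P)) \<le> 1 / sqrt (real n)"
proof -
  let ?X = "PiM {..<n} (\<lambda>_. P)"
  interpret X: prob_space ?X using P by (intro prob_space_PiM) auto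
  interpret P: prob_space P by (rule P(1))
  have xs: "\<forall>i<n. xs i \<in> space M" if "xs \<in> space ?X" for xs
    using PiM_lessThan_space[OF P(2) that] .
  have eq: "mmd k P (wpm M n xs (\<lambda>_. 1 / real n)) = sqrt (empirical_mmd2 P n xs)" if "xs \<in> space ?X" for xs
    using mmd_wpm_uniform_eq[OF P n xs[OF that]] .
  have nonneg: "0 \<le> empirical_mmd2 P n xs" if "xs \<in> space ?X" for xs
    using mmd2_nonneg[OF P prob_space_wpm_uniform[OF n xs[OF that]]] mmd2_wpm_uniform[OF P n xs[OF that]]
    by simp
  have integrable: "integrable ?X (\<lambda>xs. empirical_mmd2 P n xs)"
    using borel_measurable_empirical_mmd2[OF P] abs_empirical_mmd2_le[OF P] xs by (intro X.integrable_const_bound[of _ 4]) (auto intro!: AE_I2)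
  have "(\<integral>xs. mmd k P (wpm M n xs (\<lambda>_. 1 / real n)) \<partial>?X) = (\<integral>xs. sqrt (empirical_mmd2 P n xs) \<partial>?X)"
    by (intro Bochner_Integration.integral_cong refl) (simp add: eq)
  also have "\<dots> \<le> sqrt (\<integral>xs. empirical_mmd2 P n xs \<partial>?X)"
    using integrable integrable_mmd_wpm_uniform[OF P n] nonneg
    by (intro X.expectation_sqrt_le) (auto simp: Bochner_Integration.integrable_cong[OF refl eq] intro!: AE_I2)
  also have "\<dots> \<le> sqrt (1 / real n)"
  proof -
    have "\<bar>\<integral>x. k x x \<partial>P\<bar> \<le> 1"
      using kernel_bounded sets_eq_imp_space_eq[OF P(2)]
      by (intro P.abs_integral_le_const measurable_kernel) (auto intro!: AE_I2 simp: measurable_ident_sets[OF P(2)])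
    moreover have "0 \<le> mean_embedding_inner k P P"
      using mean_embedding_gram_nonneg[where P = "\<lambda>_. P" and c = "\<lambda>_. 1" and m = 1] P by simp
    ultimately show ?thesis
      using n by (simp add: integral_empirical_mmd2[OF P n] divide_right_mono abs_le_iff)
  qed
  finally show ?thesis by (simp add: real_sqrt_divide)
qed

end

section \<open>The MMD minimiser under the approximate posterior\<close>

locale mmd_model = bounded_kernel +
  fixes \<Theta> :: "'t set" and Pt :: "'t \<Rightarrow> 'a measure" and thstar :: "'a measure \<Rightarrow> 't"
  assumes model_prob: "\<And>\<theta>. \<theta> \<in> \<Theta> \<Longrightarrow> prob_space (Pt \<theta>) \<and> sets (Pt \<theta>) = sets M"
    and thstar_min: "\<And>P. prob_space P \<Longrightarrow> sets P = sets M \<Longrightarrow>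
      thstar P \<in> \<Theta> \<and> (\<forall>\<theta>\<in>\<Theta>. mmd2 k P (Pt (thstar P)) \<le> mmd2 k P (Pt \<theta>))"
begin

lemma INF_mmd_model_nonneg:
  assumes P0: "prob_space P0" "sets P0 = sets M"
  shows "0 \<le> (INF \<theta>\<in>\<Theta>. mmd k P0 (Pt \<theta>))"
  using thstar_min[OF P0] model_prob mmd_nonneg[OF P0] by (intro cINF_greatest) auto

lemma mmd_minimiser_le:
  assumes P: "prob_space P" "sets P = sets M" and P0: "prob_space P0" "sets P0 = sets M"
  shows "mmd k P0 (Pt (thstar P)) \<le> (INF \<theta>\<in>\<Theta>. mmd k P0 (Pt \<theta>)) + 2 * mmd k P0 P"
proof -
  have min: "thstar P \<in> \<Theta>" "\<forall>\<theta>\<in>\<Theta>. mmd2 k P (Pt (thstar P)) \<le> mmd2 k P (Pt \<theta>)"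
    using thstar_min[OF P] by auto
  have "mmd k P0 (Pt (thstar P)) - 2 * mmd k P0 P \<le> mmd k P0 (Pt \<theta>)" if "\<theta> \<in> \<Theta>" for \<theta>
  proof -
    have Pt: "prob_space (Pt \<theta>)" "sets (Pt \<theta>) = sets M" "prob_space (Pt (thstar P))" "sets (Pt (thstar P)) = sets M"
      using model_prob that min(1) by auto
    have "mmd k P0 (Pt (thstar P)) \<le> mmd k P0 P + mmd k P (Pt (thstar P))"
      by (rule mmd_triangle[OF P0 P Pt(3,4)])
    also have "mmd k P (Pt (thstar P)) \<le> mmd k P (Pt \<theta>)"
      unfolding mmd_def using min(2) that by (auto intro: real_sqrt_le_mono)
    also have "mmd k P (Pt \<theta>) \<le> mmd k P P0 + mmd k P0 (Pt \<theta>)"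
      by (rule mmd_triangle[OF P P0 Pt(1,2)])
    finally show ?thesis using mmd_commute[OF P P0] by simp
  qed
  then have "mmd k P0 (Pt (thstar P)) - 2 * mmd k P0 P \<le> (INF \<theta>\<in>\<Theta>. mmd k P0 (Pt \<theta>))"
    using min(1) by (intro cINF_greatest) auto
  then show ?thesis by simp
qed

end

context bounded_kernel
begin

text \<open>Splitting the difference of the weight vectors into its data part and its pseudo-sample part;
  the latter contributes at most its total mass \<open>1 - \<Sum>\<^sub>i w\<^sub>i\<close> since \<open>|k| \<le> 1\<close>.\<close>

lemma mmd_wpm_uniform_posterior_le:
  assumes n: "n \<ge> 1" and xs: "\<forall>i<n. xs i \<in> space M" and xt: "\<forall>j<T. xt j \<in> space M"
    and w: "\<forall>l<n + T. 0 \<le> w l" "(\<Sum>l<n + T. w l) = 1"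
  shows "mmd k (wpm M n xs (\<lambda>_. 1 / real n)) (wpm M (n + T) (atoms n xs xt) w)
    \<le> sqrt (centred_gram k n xs w) + (1 - (\<Sum>i<n. w i))"
proof -
  define z where "z = atoms n xs xt"
  define G where "G = (\<lambda>a b. k (z a) (z b))"
  define u where "u = (\<lambda>l. if l < n then 1 / real n else 0 :: real)"
  define c where "c = (\<lambda>l. if l < n then 1 / real n - w l else 0)"
  define e where "e = (\<lambda>l. if l < n then 0 else - w l)"
  have z: "\<forall>l<n + T. z l \<in> space M" using xs xt by (auto simp: z_def atoms_def)
  have u: "\<forall>l<n + T. 0 \<le> u l" "(\<Sum>l<n + T. u l) = 1" using n by (simp_all add: u_def sum_lessThan_add)
  have psd: "\<And>v. 0 \<le> quad_form (n + T) G v"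
    unfolding quad_form_def G_def using z by (intro kernel_gram_nonneg) auto
  have Pn: "wpm M (n + T) z u = wpm M n xs (\<lambda>_. 1 / real n)"
    unfolding z_def u_def by (rule wpm_atoms_uniform)
  have split: "u l - w l = c l + e l" for l
    by (simp add: u_def c_def e_def)
  have "mmd k (wpm M n xs (\<lambda>_. 1 / real n)) (wpm M (n + T) z w)
      = sqrt (quad_form (n + T) G (\<lambda>l. c l + e l))"
    using mmd2_wpm_wpm[OF z u w] by (simp add: mmd_def Pn split G_def)
  also have "\<dots> \<le> sqrt (quad_form (n + T) G c) + sqrt (quad_form (n + T) G e)"
    by (rule sqrt_quad_form_add_le[OF psd])
  also have "quad_form (n + T) G c = centred_gram k n xs w"
    by (simp add: quad_form_def centred_gram_def sum_lessThan_add c_def G_def z_def atoms_def)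
  also have "sqrt (quad_form (n + T) G e) \<le> (\<Sum>l<n + T. \<bar>e l\<bar>)"
    unfolding G_def using z kernel_bounded by (intro sqrt_quad_form_le_sum_abs) auto
  also have "(\<Sum>l<n + T. \<bar>e l\<bar>) = 1 - (\<Sum>i<n. w i)"
    using w by (simp add: e_def sum_lessThan_add)
  finally show ?thesis by (simp add: z_def)
qed

end

locale kernel_dirichlet_model = kernel_dirichlet M k n T \<alpha> + mmd_model M k \<Theta> Pt thstar
  for M k n T \<alpha> \<Theta> Pt thstar
begin

lemma mmd_posterior_minimiser_le:
  assumes P0: "prob_space P0" "sets P0 = sets M"
    and xs: "\<forall>i<n. xs i \<in> space M" and xt: "\<forall>j<T. xt j \<in> space M"
    and w: "\<forall>l<n + T. 0 \<le> w l" "(\<Sum>l<n + T. w l) = 1"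
  shows "mmd k P0 (Pt (thstar (wpm M (n + T) (atoms n xs xt) w)))
    \<le> (INF \<theta>\<in>\<Theta>. mmd k P0 (Pt \<theta>)) + 2 * mmd k P0 (wpm M n xs (\<lambda>_. 1 / real n))
      + 2 * sqrt (centred_gram k n xs w) + 2 * (1 - (\<Sum>i<n. w i))"
proof -
  have z: "\<forall>l<n + T. atoms n xs xt l \<in> space M" using xs xt by (auto simp: atoms_def)
  have Pw: "prob_space (wpm M (n + T) (atoms n xs xt) w)" "sets (wpm M (n + T) (atoms n xs xt) w) = sets M"
    using z w by (simp_all add: prob_space_wpm sets_wpm)
  note Pn = prob_space_wpm_uniform[OF n_pos xs]
  have "mmd k P0 (wpm M (n + T) (atoms n xs xt) w)
      \<le> mmd k P0 (wpm M n xs (\<lambda>_. 1 / real n)) + sqrt (centred_gram k n xs w) + (1 - (\<Sum>i<n. w i))"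
    using mmd_triangle[OF P0 Pn Pw] mmd_wpm_uniform_posterior_le[OF n_pos xs xt w] by linarith
  then have "2 * mmd k P0 (wpm M (n + T) (atoms n xs xt) w)
      \<le> 2 * mmd k P0 (wpm M n xs (\<lambda>_. 1 / real n)) + 2 * sqrt (centred_gram k n xs w) + 2 * (1 - (\<Sum>i<n. w i))"
    by simp
  with mmd_minimiser_le[OF Pw P0] show ?thesis by simp
qed

lemma integral_posterior_mmd_le:
  assumes P0: "prob_space P0" "sets P0 = sets M" and F: "prob_space F" "sets F = sets M"
    and xs: "\<forall>i<n. xs i \<in> space M"
  shows "(\<integral>(w, xt). mmd k P0 (Pt (thstar (wpm M (n + T) (atoms n xs xt) w))) \<partial>post_law n T \<alpha> F)
    \<le> (INF \<theta>\<in>\<Theta>. mmd k P0 (Pt \<theta>)) + 2 * mmd k P0 (wpm M n xs (\<lambda>_. 1 / real n))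
      + 2 * sqrt ((2 * (real n - 1) + \<alpha> * (\<alpha> + 1)) / ((\<alpha> + real n) * (real n + \<alpha> + 1)))
      + 2 * sqrt (\<alpha> * (1 + \<alpha>) / ((\<alpha> + real n) * (\<alpha> + real n + 1)))"
proof -
  interpret D: prob_space Dir by (rule prob_space_Dir)
  define h where "h = (\<lambda>w. (INF \<theta>\<in>\<Theta>. mmd k P0 (Pt \<theta>)) + 2 * mmd k P0 (wpm M n xs (\<lambda>_. 1 / real n))
    + 2 * sqrt (centred_gram k n xs w) + 2 * (1 - (\<Sum>i<n. w i)))"
  have sum_integrable: "integrable Dir (\<lambda>w. \<Sum>i<n. w i)"
    by (intro Bochner_Integration.integrable_sum integrable_Dir_component) auto
  have h_integrable: "integrable Dir h"
    unfolding h_def using integrable_sqrt_centred_gram[OF xs] sum_integrable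
    by (intro Bochner_Integration.integrable_add Bochner_Integration.integrable_diff integrable_mult_right) auto
  have "(\<integral>(w, xt). mmd k P0 (Pt (thstar (wpm M (n + T) (atoms n xs xt) w))) \<partial>post_law n T \<alpha> F)
      \<le> (\<integral>p. h (fst p) \<partial>post_law n T \<alpha> F)"
  proof (rule integral_mono_AE')
    show "integrable (post_law n T \<alpha> F) (\<lambda>p. h (fst p))"
      by (rule integral_post_law_fst(1)[OF F(1) h_integrable])
    show "AE p in post_law n T \<alpha> F.
        (case p of (w, xt) \<Rightarrow> mmd k P0 (Pt (thstar (wpm M (n + T) (atoms n xs xt) w)))) \<le> h (fst p)"
      using AE_post_law_simplex[OF F(1)]
    proof (rule AE_mp, intro AE_I2 impI)
      fix p assume "p \<in> space (post_law n T \<alpha> F)"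
        and simplex: "(\<forall>l<n + T. 0 \<le> fst p l) \<and> (\<Sum>l<n + T. fst p l) = 1"
      then have "\<forall>j<T. snd p j \<in> space M"
        using sets_eq_imp_space_eq[OF F(2)] by (auto simp: post_law_def space_pair_measure space_PiM PiE_iff)
      then show "(case p of (w, xt) \<Rightarrow> mmd k P0 (Pt (thstar (wpm M (n + T) (atoms n xs xt) w)))) \<le> h (fst p)"
        using mmd_posterior_minimiser_le[OF P0 xs, of "snd p" "fst p"] simplex
        by (simp add: h_def prod.case_eq_if)
    qed
    show "AE p in post_law n T \<alpha> F. 0 \<le> h (fst p)"
      using AE_post_law_simplex[OF F(1)]
    proof eventually_elim
      case (elim p)
      then show ?case
        using sum_data_weights_le_1[of "fst p"] INF_mmd_model_nonneg[OF P0]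
          mmd_nonneg[OF P0 prob_space_wpm_uniform[OF n_pos xs]] centred_gram_nonneg[OF xs]
        by (simp add: h_def)
    qed
  qed
  also have "\<dots> = (\<integral>w. h w \<partial>Dir)"
    by (rule integral_post_law_fst(2)[OF F(1) h_integrable])
  also have "\<dots> = (INF \<theta>\<in>\<Theta>. mmd k P0 (Pt \<theta>)) + 2 * mmd k P0 (wpm M n xs (\<lambda>_. 1 / real n))
      + 2 * (\<integral>w. sqrt (centred_gram k n xs w) \<partial>Dir) + 2 * (\<integral>w. 1 - (\<Sum>i<n. w i) \<partial>Dir)"
    unfolding h_def using integrable_sqrt_centred_gram[OF xs] sum_integrable D.prob_space
    by (simp add: Bochner_Integration.integral_add Bochner_Integration.integral_diff)
  also have "\<dots> \<le> (INF \<theta>\<in>\<Theta>. mmd k P0 (Pt \<theta>)) + 2 * mmd k P0 (wpm M n xs (\<lambda>_. 1 / real n))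
      + 2 * sqrt ((2 * (real n - 1) + \<alpha> * (\<alpha> + 1)) / ((\<alpha> + real n) * (real n + \<alpha> + 1)))
      + 2 * sqrt (\<alpha> * (1 + \<alpha>) / ((\<alpha> + real n) * (\<alpha> + real n + 1)))"
    using expectation_sqrt_centred_gram_le[OF xs] tail_mass_le_sqrt[of "real n" \<alpha>] n_pos \<alpha>_pos
    by (simp add: expectation_tail_mass)
  finally show ?thesis .
qed

end

theorem theorem1:
  fixes M :: "'a measure"
    and k :: "'a \<Rightarrow> 'a \<Rightarrow> real"
    and \<Theta> :: "'t set"
    and Pt :: "'t \<Rightarrow> 'a measure"
    and thstar :: "'a measure \<Rightarrow> 't"
    and P0 F :: "'a measure"
    and n T :: nat
    and \<alpha> :: real
  assumes k_meas: "(\<lambda>(x, y). k x y) \<in> borel_measurable (M \<Otimes>\<^sub>M M)"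
    and k_pd: "pd_kernel (space M) k"
    and k_bdd: "\<And>x y. x \<in> space M \<Longrightarrow> y \<in> space M \<Longrightarrow> \<bar>k x y\<bar> \<le> 1"
    and Pt_prob: "\<And>\<theta>. \<theta> \<in> \<Theta> \<Longrightarrow> prob_space (Pt \<theta>) \<and> sets (Pt \<theta>) = sets M"
    and thstar_min: "\<And>P. prob_space P \<Longrightarrow> sets P = sets M \<Longrightarrow>
           thstar P \<in> \<Theta> \<and> (\<forall>\<theta>\<in>\<Theta>. mmd2 k P (Pt (thstar P)) \<le> mmd2 k P (Pt \<theta>))"
    and thstar_meas: "(\<lambda>(xs, (w, xt)). mmd k P0 (Pt (thstar (wpm M (n + T) (atoms n xs xt) w))))
           \<in> borel_measurable (PiM {..<n} (\<lambda>_. M) \<Otimes>\<^sub>M post_law n T \<alpha> F)"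
    and P0_prob: "prob_space P0" and P0_sets: "sets P0 = sets M"
    and F_prob: "prob_space F" and F_sets: "sets F = sets M"
    and n_pos: "n \<ge> 1" and T_pos: "T \<ge> 1" and \<alpha>_pos: "\<alpha> > 0"
  shows "(\<integral>xs. (\<integral>(w, xt). mmd k P0 (Pt (thstar (wpm M (n + T) (atoms n xs xt) w)))
              \<partial>(post_law n T \<alpha> F)) \<partial>(PiM {..<n} (\<lambda>_. P0)))
         \<le> (INF \<theta>\<in>\<Theta>. mmd k P0 (Pt \<theta>)) + 2 / sqrt (real n)
           + 2 * sqrt ((2 * (real n - 1) + \<alpha> * (\<alpha> + 1)) / ((\<alpha> + real n) * (real n + \<alpha> + 1)))
           + 2 * sqrt (\<alpha> * (1 + \<alpha>) / ((\<alpha> + real n) * (\<alpha> + real n + 1)))"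
proof -
  interpret kernel_dirichlet_model M k n T \<alpha> \<Theta> Pt thstar
    using k_meas k_pd k_bdd Pt_prob thstar_min n_pos T_pos \<alpha>_pos by unfold_locales auto
  let ?X = "PiM {..<n} (\<lambda>_. P0)"
  let ?empirical = "\<lambda>xs. mmd k P0 (wpm M n xs (\<lambda>_. 1 / real n))"
  define C where "C = (INF \<theta>\<in>\<Theta>. mmd k P0 (Pt \<theta>))
    + 2 * sqrt ((2 * (real n - 1) + \<alpha> * (\<alpha> + 1)) / ((\<alpha> + real n) * (real n + \<alpha> + 1)))
    + 2 * sqrt (\<alpha> * (1 + \<alpha>) / ((\<alpha> + real n) * (\<alpha> + real n + 1)))"
  interpret X: prob_space ?X using P0_prob by (intro prob_space_PiM) auto
  have xs: "\<forall>i<n. xs i \<in> space M" if "xs \<in> space ?X" for xs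
    using PiM_lessThan_space[OF P0_sets that] .
  have "0 \<le> C"
    unfolding C_def using INF_mmd_model_nonneg[OF P0_prob P0_sets] n_pos \<alpha>_pos
    by (auto intro!: add_nonneg_nonneg mult_nonneg_nonneg divide_nonneg_nonneg)
  have bound: "(\<integral>(w, xt). mmd k P0 (Pt (thstar (wpm M (n + T) (atoms n xs xt) w))) \<partial>post_law n T \<alpha> F)
      \<le> C + 2 * ?empirical xs" if "xs \<in> space ?X" for xs
    using integral_posterior_mmd_le[OF P0_prob P0_sets F_prob F_sets xs[OF that]] by (simp add: C_def)
  txt \<open>Integrals of non-integrable functions are \<open>0\<close>.\<close>
  have "(\<integral>xs. (\<integral>(w, xt). mmd k P0 (Pt (thstar (wpm M (n + T) (atoms n xs xt) w))) \<partial>post_law n T \<alpha> F) \<partial>?X)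
      \<le> (\<integral>xs. C + 2 * ?empirical xs \<partial>?X)"
    using bound integrable_mmd_wpm_uniform[OF P0_prob P0_sets n_pos] \<open>0 \<le> C\<close>
      mmd_nonneg[OF P0_prob P0_sets prob_space_wpm_uniform[OF n_pos xs]]
    by (intro integral_mono_AE') (auto intro!: AE_I2)
  also have "\<dots> = C + 2 * (\<integral>xs. ?empirical xs \<partial>?X)"
    using integrable_mmd_wpm_uniform[OF P0_prob P0_sets n_pos] X.prob_space by simp
  also have "\<dots> \<le> C + 2 / sqrt (real n)"
    using integral_mmd_wpm_uniform_le[OF P0_prob P0_sets n_pos] by simp
  finally show ?thesis by (simp add: C_def algebra_simps)
qed

end
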